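(* Let $\mathbb{E}$ be a finitely complete category, $\Sigma$ a fibrational class of split epimorphisms, and suppose $\mathbb{E}$ is a $\Sigma$-Mal'tsev category. Let $d_0,d_1\colon X_1\rightrightarrows X_0$, $s_0\colon X_0\to X_1$ be a reflexive graph. The following are equivalent: (1) the graph underlies a $\Sigma$-groupoid; (2) the kernel relation $R[d_0]$ is a $\Sigma$-relation and $[R[d_0],R[d_1]]=0$. Moreover, a reflexive relation $S$ on $X$ (with first projection $d_0\colon S\to X$) is a $\Sigma$-equivalence relation if and only if the kernel relation $R[d_0]$ of $d_0\colon S\to X$ is a $\Sigma$-relation.
   Context: A split epimorphism is a pair $(f,s)$ with $fs=1$. A class $\Sigma$ of split epimorphisms is fibrational if it contains all split epimorphisms $(f,s)$ with $f$ invertible and is stable under pullback along any morphism. A pair of morphisms with common codomain $Z$ is jointly extremally epic if it factors jointly through no non-invertible monomorphism into $Z$. $\mathbb{E}$ is $\Sigma$-Mal'tsev if for every split epimorphism $(f,s)\colon X\rightleftarrows Y$ in $\Sigma$ and every split epimorphism $(g,t)$ with $g\colon Y'\to Y$, letting $X'=Y'\times_YX$, $s'=(1_{Y'},sg)$, $\bar t=(tf,1_X)$, the pair $(s',\bar t)$ is jointly extremally epic. A $\Sigma$-relation is a reflexive relation $(d_0,d_1)\colon S\rightarrowtail X\times X$ with reflexivity $s_0$ such that $(d_0,s_0)\in\Sigma$; a $\Sigma$-equivalence relation is an equivalence relation which is a $\Sigma$-relation; a $\Sigma$-groupoid is an internal groupoid whose underlying reflexive graph $(d_0,d_1,s_0)$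 has $(d_0,s_0)\in\Sigma$. The kernel relation $R[f]$ of $f\colon A\to B$ is $A\times_BA$ with its two projections and the diagonal. For reflexive relations $R,S$ on $X$, $R\times_XS$ is the pullback of $d_0^S$ along $d_1^R$ (elements $xRySz$), $\sigma_0^R\colon R\to R\times_XS$, $xRy\mapsto xRySy$, and $\sigma_0^S\colon S\to R\times_XS$, $ySz\mapsto yRySz$. $[R,S]=0$ means there is a morphism $p\colon R\times_XS\to X$ with $p\sigma_0^R=d_0^R$ and $p\sigma_0^S=d_1^S$. *)

theory Defs
  imports Main
begin

text \<open>A category whose objects are all elements of type 'o and whose morphisms are all
elements of type 'm.  Cmp C g f is the composite "g after f" (defined when Cod f = Dom g).\<close>

record ('o, 'm) cat =
  Dom :: "'m \<Rightarrow> 'o"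
  Cod :: "'m \<Rightarrow> 'o"
  Idm :: "'o \<Rightarrow> 'm"
  Cmp :: "'m \<Rightarrow> 'm \<Rightarrow> 'm"

definition hom :: "('o, 'm) cat \<Rightarrow> 'm \<Rightarrow> 'o \<Rightarrow> 'o \<Rightarrow> bool" where
  "hom C f X Y \<longleftrightarrow> Dom C f = X \<and> Cod C f = Y"

definition category :: "('o, 'm) cat \<Rightarrow> bool" where
  "category C \<longleftrightarrow>
     (\<forall>X. hom C (Idm C X) X X) \<and>
     (\<forall>f g. Cod C f = Dom C g \<longrightarrow> hom C (Cmp C g f) (Dom C f) (Cod C g)) \<and>
     (\<forall>f. Cmp C f (Idm C (Dom C f)) = f \<and> Cmp C (Idm C (Cod C f)) f = f) \<and>
     (\<forall>f g h. Cod C f = Dom C g \<and> Cod C g = Dom C h \<longrightarrow>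
        Cmp C h (Cmp C g f) = Cmp C (Cmp C h g) f)"

definition iso :: "('o, 'm) cat \<Rightarrow> 'm \<Rightarrow> bool" where
  "iso C f \<longleftrightarrow> (\<exists>g. hom C g (Cod C f) (Dom C f) \<and>
     Cmp C g f = Idm C (Dom C f) \<and> Cmp C f g = Idm C (Cod C f))"

definition mono :: "('o, 'm) cat \<Rightarrow> 'm \<Rightarrow> bool" where
  "mono C m \<longleftrightarrow> (\<forall>a b. Cod C a = Dom C m \<and> Cod C b = Dom C m \<and> Dom C a = Dom C b \<and>
     Cmp C m a = Cmp C m b \<longrightarrow> a = b)"

definition is_pullback :: "('o, 'm) cat \<Rightarrow> 'm \<Rightarrow> 'm \<Rightarrow> 'o \<Rightarrow> 'm \<Rightarrow> 'm \<Rightarrow> bool" where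
  "is_pullback C f g P p q \<longleftrightarrow>
     Cod C f = Cod C g \<and> hom C p P (Dom C f) \<and> hom C q P (Dom C g) \<and>
     Cmp C f p = Cmp C g q \<and>
     (\<forall>W a b. hom C a W (Dom C f) \<and> hom C b W (Dom C g) \<and> Cmp C f a = Cmp C g b \<longrightarrow>
        (\<exists>!u. hom C u W P \<and> Cmp C p u = a \<and> Cmp C q u = b))"

definition is_terminal :: "('o, 'm) cat \<Rightarrow> 'o \<Rightarrow> bool" where
  "is_terminal C T \<longleftrightarrow> (\<forall>X. \<exists>!u. hom C u X T)"

definition finitely_complete :: "('o, 'm) cat \<Rightarrow> bool" where
  "finitely_complete C \<longleftrightarrow> (\<exists>T. is_terminal C T) \<and>
     (\<forall>f g. Cod C f = Cod C g \<longrightarrow> (\<exists>P p q. is_pullback C f g P p q))"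

definition is_product :: "('o, 'm) cat \<Rightarrow> 'o \<Rightarrow> 'o \<Rightarrow> 'o \<Rightarrow> 'm \<Rightarrow> 'm \<Rightarrow> bool" where
  "is_product C X Y P p q \<longleftrightarrow> hom C p P X \<and> hom C q P Y \<and>
     (\<forall>W a b. hom C a W X \<and> hom C b W Y \<longrightarrow>
        (\<exists>!u. hom C u W P \<and> Cmp C p u = a \<and> Cmp C q u = b))"

definition split_epi :: "('o, 'm) cat \<Rightarrow> 'm \<Rightarrow> 'm \<Rightarrow> bool" where
  "split_epi C f s \<longleftrightarrow> hom C s (Cod C f) (Dom C f) \<and> Cmp C f s = Idm C (Cod C f)"

definition fibrational :: "('o, 'm) cat \<Rightarrow> ('m \<times> 'm) set \<Rightarrow> bool" where
  "fibrational C Sig \<longleftrightarrow>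
     (\<forall>f s. (f, s) \<in> Sig \<longrightarrow> split_epi C f s) \<and>
     (\<forall>f s. split_epi C f s \<and> iso C f \<longrightarrow> (f, s) \<in> Sig) \<and>
     (\<forall>f s h P f' h' s'. (f, s) \<in> Sig \<and> Cod C h = Cod C f \<and> is_pullback C h f P f' h' \<and>
        hom C s' (Dom C h) P \<and> Cmp C f' s' = Idm C (Dom C h) \<and> Cmp C h' s' = Cmp C s h
        \<longrightarrow> (f', s') \<in> Sig)"

definition jointly_extremally_epic :: "('o, 'm) cat \<Rightarrow> 'm \<Rightarrow> 'm \<Rightarrow> 'o \<Rightarrow> bool" where
  "jointly_extremally_epic C a b Z \<longleftrightarrow> Cod C a = Z \<and> Cod C b = Z \<and>
     (\<forall>m a' b'. mono C m \<and> Cod C m = Z \<and> hom C a' (Dom C a) (Dom C m) \<and>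
        hom C b' (Dom C b) (Dom C m) \<and> Cmp C m a' = a \<and> Cmp C m b' = b \<longrightarrow> iso C m)"

definition sigma_maltsev :: "('o, 'm) cat \<Rightarrow> ('m \<times> 'm) set \<Rightarrow> bool" where
  "sigma_maltsev C Sig \<longleftrightarrow>
     (\<forall>f s g t X' f' g' s' tb.
        (f, s) \<in> Sig \<and> split_epi C g t \<and> Cod C g = Cod C f \<and> is_pullback C g f X' f' g' \<and>
        hom C s' (Dom C g) X' \<and> Cmp C f' s' = Idm C (Dom C g) \<and> Cmp C g' s' = Cmp C s g \<and>
        hom C tb (Dom C f) X' \<and> Cmp C f' tb = Cmp C t f \<and> Cmp C g' tb = Idm C (Dom C f)
        \<longrightarrow> jointly_extremally_epic C s' tb X')"

definition refl_graph :: "('o, 'm) cat \<Rightarrow> 'o \<Rightarrow> 'o \<Rightarrow> 'm \<Rightarrow> 'm \<Rightarrow> 'm \<Rightarrow> bool" where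
  "refl_graph C X0 X1 d0 d1 s0 \<longleftrightarrow> hom C d0 X1 X0 \<and> hom C d1 X1 X0 \<and> hom C s0 X0 X1 \<and>
     Cmp C d0 s0 = Idm C X0 \<and> Cmp C d1 s0 = Idm C X0"

definition refl_rel :: "('o, 'm) cat \<Rightarrow> 'o \<Rightarrow> 'o \<Rightarrow> 'm \<Rightarrow> 'm \<Rightarrow> 'm \<Rightarrow> bool" where
  "refl_rel C X S d0 d1 s0 \<longleftrightarrow> refl_graph C X S d0 d1 s0 \<and>
     (\<forall>P p q m. is_product C X X P p q \<and> hom C m S P \<and> Cmp C p m = d0 \<and> Cmp C q m = d1
        \<longrightarrow> mono C m)"

definition sigma_rel :: "('o, 'm) cat \<Rightarrow> ('m \<times> 'm) set \<Rightarrow> 'o \<Rightarrow> 'o \<Rightarrow> 'm \<Rightarrow> 'm \<Rightarrow> 'm \<Rightarrow> bool" where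
  "sigma_rel C Sig X S d0 d1 s0 \<longleftrightarrow> refl_rel C X S d0 d1 s0 \<and> (d0, s0) \<in> Sig"

text \<open>Equivalence relation: reflexive, symmetric, transitive (S \<times>_X S is the pullback of
  d0 along d1, elements xSySz).\<close>
definition equiv_rel :: "('o, 'm) cat \<Rightarrow> 'o \<Rightarrow> 'o \<Rightarrow> 'm \<Rightarrow> 'm \<Rightarrow> 'm \<Rightarrow> bool" where
  "equiv_rel C X S d0 d1 s0 \<longleftrightarrow> refl_rel C X S d0 d1 s0 \<and>
     (\<exists>\<sigma>. hom C \<sigma> S S \<and> Cmp C d0 \<sigma> = d1 \<and> Cmp C d1 \<sigma> = d0) \<and>
     (\<forall>P p q. is_pullback C d1 d0 P p q \<longrightarrow>
        (\<exists>\<tau>. hom C \<tau> P S \<and> Cmp C d0 \<tau> = Cmp C d0 p \<and> Cmp C d1 \<tau> = Cmp C d1 q))"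

definition sigma_equiv_rel :: "('o, 'm) cat \<Rightarrow> ('m \<times> 'm) set \<Rightarrow> 'o \<Rightarrow> 'o \<Rightarrow> 'm \<Rightarrow> 'm \<Rightarrow> 'm \<Rightarrow> bool" where
  "sigma_equiv_rel C Sig X S d0 d1 s0 \<longleftrightarrow> equiv_rel C X S d0 d1 s0 \<and> (d0, s0) \<in> Sig"

definition kernel_rel :: "('o, 'm) cat \<Rightarrow> 'm \<Rightarrow> 'o \<Rightarrow> 'm \<Rightarrow> 'm \<Rightarrow> 'm \<Rightarrow> bool" where
  "kernel_rel C f K k0 k1 \<delta> \<longleftrightarrow> is_pullback C f f K k0 k1 \<and> hom C \<delta> (Dom C f) K \<and>
     Cmp C k0 \<delta> = Idm C (Dom C f) \<and> Cmp C k1 \<delta> = Idm C (Dom C f)"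

definition kernel_is_sigma_rel :: "('o, 'm) cat \<Rightarrow> ('m \<times> 'm) set \<Rightarrow> 'm \<Rightarrow> bool" where
  "kernel_is_sigma_rel C Sig f \<longleftrightarrow>
     (\<forall>K k0 k1 \<delta>. kernel_rel C f K k0 k1 \<delta> \<longrightarrow> sigma_rel C Sig (Dom C f) K k0 k1 \<delta>)"

text \<open>[R, S] = 0 for reflexive relations R = (R, r0, r1, rs), S = (S, t0, t1, ts) on X.
  R \<times>_X S is the pullback of t0 along r1 (elements xRySz).\<close>
definition commutator_zero :: "('o, 'm) cat \<Rightarrow> 'o \<Rightarrow> 'o \<Rightarrow> 'm \<Rightarrow> 'm \<Rightarrow> 'm \<Rightarrow>
    'o \<Rightarrow> 'm \<Rightarrow> 'm \<Rightarrow> 'm \<Rightarrow> bool" where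
  "commutator_zero C X R r0 r1 rs S t0 t1 ts \<longleftrightarrow>
     (\<forall>P pR pS \<sigma>R \<sigma>S. is_pullback C r1 t0 P pR pS \<and>
        hom C \<sigma>R R P \<and> Cmp C pR \<sigma>R = Idm C R \<and> Cmp C pS \<sigma>R = Cmp C ts r1 \<and>
        hom C \<sigma>S S P \<and> Cmp C pR \<sigma>S = Cmp C rs t0 \<and> Cmp C pS \<sigma>S = Idm C S \<longrightarrow>
        (\<exists>p. hom C p P X \<and> Cmp C p \<sigma>R = r0 \<and> Cmp C p \<sigma>S = t1))"

definition kernels_commute :: "('o, 'm) cat \<Rightarrow> 'm \<Rightarrow> 'm \<Rightarrow> bool" where
  "kernels_commute C f g \<longleftrightarrow>
     (\<forall>K k0 k1 \<delta> L l0 l1 \<epsilon>. kernel_rel C f K k0 k1 \<delta> \<and> kernel_rel C g L l0 l1 \<epsilon> \<longrightarrow>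
        commutator_zero C (Dom C f) K k0 k1 \<delta> L l0 l1 \<epsilon>)"

text \<open>Internal groupoid structure on a reflexive graph: X1 \<times>_X0 X1 is the pullback of
  d0 along d1 (composable pairs (f, g) with d1 f = d0 g), m is composition, i inversion.\<close>
definition is_groupoid :: "('o, 'm) cat \<Rightarrow> 'o \<Rightarrow> 'o \<Rightarrow> 'm \<Rightarrow> 'm \<Rightarrow> 'm \<Rightarrow> bool" where
  "is_groupoid C X0 X1 d0 d1 s0 \<longleftrightarrow> refl_graph C X0 X1 d0 d1 s0 \<and>
     (\<exists>P \<pi>1 \<pi>2 m i. is_pullback C d1 d0 P \<pi>1 \<pi>2 \<and>
        hom C m P X1 \<and> Cmp C d0 m = Cmp C d0 \<pi>1 \<and> Cmp C d1 m = Cmp C d1 \<pi>2 \<and>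
        hom C i X1 X1 \<and> Cmp C d0 i = d1 \<and> Cmp C d1 i = d0 \<and>
        (\<forall>e. hom C e X1 P \<and> Cmp C \<pi>1 e = Cmp C s0 d0 \<and> Cmp C \<pi>2 e = Idm C X1
           \<longrightarrow> Cmp C m e = Idm C X1) \<and>
        (\<forall>e. hom C e X1 P \<and> Cmp C \<pi>1 e = Idm C X1 \<and> Cmp C \<pi>2 e = Cmp C s0 d1
           \<longrightarrow> Cmp C m e = Idm C X1) \<and>
        (\<forall>e. hom C e X1 P \<and> Cmp C \<pi>1 e = Idm C X1 \<and> Cmp C \<pi>2 e = i
           \<longrightarrow> Cmp C m e = Cmp C s0 d0) \<and>
        (\<forall>e. hom C e X1 P \<and> Cmp C \<pi>1 e = i \<and> Cmp C \<pi>2 e = Idm C X1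
           \<longrightarrow> Cmp C m e = Cmp C s0 d1) \<and>
        (\<forall>Q q1 q2 u v. is_pullback C \<pi>2 \<pi>1 Q q1 q2 \<and>
           hom C u Q P \<and> Cmp C \<pi>1 u = Cmp C m q1 \<and> Cmp C \<pi>2 u = Cmp C \<pi>2 q2 \<and>
           hom C v Q P \<and> Cmp C \<pi>1 v = Cmp C \<pi>1 q1 \<and> Cmp C \<pi>2 v = Cmp C m q2
           \<longrightarrow> Cmp C m u = Cmp C m v))"

definition sigma_groupoid :: "('o, 'm) cat \<Rightarrow> ('m \<times> 'm) set \<Rightarrow> 'o \<Rightarrow> 'o \<Rightarrow> 'm \<Rightarrow> 'm \<Rightarrow> 'm \<Rightarrow> bool" where
  "sigma_groupoid C Sig X0 X1 d0 d1 s0 \<longleftrightarrow> is_groupoid C X0 X1 d0 d1 s0 \<and> (d0, s0) \<in> Sig"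

end

theory Submission
  imports Defs
begin

text \<open>For a \<Sigma>-groupoid, the map (f, g) \<mapsto> f\<inverse> g exhibits R[d0] as the pullback of the split
  epimorphism (d0, s0) along d1, so fibrationality makes R[d0] a \<Sigma>-relation, and
  p(a, b, c) = a b\<inverse> c is a connector between R[d0] and R[d1]. Conversely, (d0, s0) is itself a
  pullback of the split epimorphism (k0, \<delta>) of R[d0], hence lies in \<Sigma>. The \<Sigma>-Mal'tsev property
  makes the two canonical sections of a pullback of a \<Sigma>-split epimorphism jointly extremally epic,
  hence jointly epic, so morphisms out of such a pullback are determined on the sections. Tested on
  the object of quintuples, this yields the associativity p(a, b, p(c, e, f)) = p(p(a, b, c), e, f)
  of a connector, which together with p(a, b, b) = a and p(b, b, c) = c provides the composition
  p(g, 1, f) and inverse p(s0 d0, 1, s0 d1) of a groupoid. For a reflexive relation S, the same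
  factorisation argument through the monomorphism S \<rightarrowtail> X \<times> X gives difunctionality, hence an
  equivalence relation; conversely R[d0] of an equivalence relation is the pullback of (d0, s0)
  along d1.\<close>

section \<open>Pullbacks\<close>

locale cat_context =
  fixes C :: "('o,'m) cat"
  assumes is_category: "category C"
begin

abbreviation dm where "dm \<equiv> Dom C"
abbreviation cd where "cd \<equiv> Cod C"
abbreviation idm where "idm \<equiv> Idm C"
abbreviation comp (infixr "\<cdot>" 55) where "g \<cdot> f \<equiv> Cmp C g f"

lemma dom_id[simp]: "dm (idm X) = X" and cod_id[simp]: "cd (idm X) = X"
  using is_category unfolding category_def hom_def by blast+

lemma dom_comp[simp]: "cd f = dm g \<Longrightarrow> dm (g \<cdot> f) = dm f"
  and cod_comp[simp]: "cd f = dm g \<Longrightarrow> cd (g \<cdot> f) = cd g"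
  using is_category unfolding category_def hom_def by blast+

lemma comp_id_right[simp]: "dm f = X \<Longrightarrow> f \<cdot> idm X = f"
  and comp_id_left[simp]: "cd f = X \<Longrightarrow> idm X \<cdot> f = f"
  using is_category unfolding category_def by blast+

lemma comp_assoc[simp]: "cd f = dm g \<Longrightarrow> cd g = dm h \<Longrightarrow> (h \<cdot> g) \<cdot> f = h \<cdot> (g \<cdot> f)"
  using is_category unfolding category_def by (metis (no_types))

lemma comp_eq_extend: "x \<cdot> y = z \<Longrightarrow> cd y = dm x \<Longrightarrow> cd h = dm y \<Longrightarrow> x \<cdot> (y \<cdot> h) = z \<cdot> h"
  by (metis comp_assoc)

lemma comp_eq_extend2:
  "x \<cdot> y = x' \<cdot> y' \<Longrightarrow> cd y = dm x \<Longrightarrow> cd y' = dm x' \<Longrightarrow> cd h = dm y \<Longrightarrow> cd h = dm y' \<Longrightarrow>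
    x \<cdot> (y \<cdot> h) = x' \<cdot> (y' \<cdot> h)"
  by (metis comp_assoc)

lemma monoI:
  "(\<And>a b. cd a = dm m \<Longrightarrow> cd b = dm m \<Longrightarrow> dm a = dm b \<Longrightarrow> m \<cdot> a = m \<cdot> b \<Longrightarrow> a = b) \<Longrightarrow> mono C m"
  unfolding mono_def by blast

lemma monoD: "mono C m \<Longrightarrow> cd a = dm m \<Longrightarrow> cd b = dm m \<Longrightarrow> dm a = dm b \<Longrightarrow> m \<cdot> a = m \<cdot> b \<Longrightarrow> a = b"
  unfolding mono_def by blast

lemma isoE:
  "iso C f \<Longrightarrow> (\<And>g. cd g = dm f \<Longrightarrow> dm g = cd f \<Longrightarrow> g \<cdot> f = idm (dm f) \<Longrightarrow> f \<cdot> g = idm (cd f) \<Longrightarrow> thesis)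
    \<Longrightarrow> thesis"
  unfolding iso_def hom_def by blast

lemma terminal_arrow_unique: "is_terminal C T \<Longrightarrow> cd u = T \<Longrightarrow> cd v = T \<Longrightarrow> dm u = dm v \<Longrightarrow> u = v"
  unfolding is_terminal_def hom_def by metis

lemma terminal_arrow_exists: "is_terminal C T \<Longrightarrow> \<exists>u. dm u = X \<and> cd u = T"
  unfolding is_terminal_def hom_def by metis

end

text \<open>The mediating morphism into a pullback; it is unspecified unless a and b form a cone.\<close>
definition pb_pair :: "('o,'m) cat \<Rightarrow> 'm \<Rightarrow> 'm \<Rightarrow> 'm \<Rightarrow> 'm \<Rightarrow> 'm" where
  "pb_pair C p q a b = (THE u. Dom C u = Dom C a \<and> Cod C u = Dom C p \<and> Cmp C p u = a \<and> Cmp C q u = b)"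

context cat_context begin

lemma pullbackD:
  assumes "is_pullback C f g P p q"
  shows "dm p = P" "dm q = P" "cd p = dm f" "cd q = dm g" "f \<cdot> p = g \<cdot> q" "cd f = cd g"
  using assms unfolding is_pullback_def hom_def by blast+

lemma pullback_sym: "is_pullback C f g P p q \<Longrightarrow> is_pullback C g f P q p"
  unfolding is_pullback_def hom_def by metis

lemma pullbackI:
  assumes "cd f = cd g" "dm p = P" "cd p = dm f" "dm q = P" "cd q = dm g" "f \<cdot> p = g \<cdot> q"
    and ex: "\<And>a b. cd a = dm f \<Longrightarrow> cd b = dm g \<Longrightarrow> dm a = dm b \<Longrightarrow> f \<cdot> a = g \<cdot> b \<Longrightarrow>
        \<exists>u. dm u = dm a \<and> cd u = P \<and> p \<cdot> u = a \<and> q \<cdot> u = b"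
    and un: "\<And>u v. cd u = P \<Longrightarrow> cd v = P \<Longrightarrow> dm u = dm v \<Longrightarrow> p \<cdot> u = p \<cdot> v \<Longrightarrow> q \<cdot> u = q \<cdot> v \<Longrightarrow> u = v"
  shows "is_pullback C f g P p q"
proof -
  have "\<exists>!u. hom C u W P \<and> p \<cdot> u = a \<and> q \<cdot> u = b"
    if ab: "hom C a W (dm f)" "hom C b W (dm g)" "f \<cdot> a = g \<cdot> b" for W a b
  proof -
    have h: "cd a = dm f" "cd b = dm g" "dm a = W" "dm b = W" using ab unfolding hom_def by auto
    obtain u where u: "dm u = dm a" "cd u = P" "p \<cdot> u = a" "q \<cdot> u = b" using ex h ab(3) by metis
    show ?thesis
    proof (rule ex1I[of _ u])
      fix v assume "hom C v W P \<and> p \<cdot> v = a \<and> q \<cdot> v = b"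
      then show "v = u" using un[of v u] u h unfolding hom_def by simp
    qed (use u h in \<open>simp add: hom_def\<close>)
  qed
  then show ?thesis using assms(1-6) unfolding is_pullback_def hom_def by blast
qed

lemma pullback_universal:
  assumes pb: "is_pullback C f g P p q" and "cd a = dm f" "cd b = dm g" "dm a = dm b" "f \<cdot> a = g \<cdot> b"
  shows "\<exists>!u. dm u = dm a \<and> cd u = P \<and> p \<cdot> u = a \<and> q \<cdot> u = b"
proof -
  have U: "\<forall>W a b. hom C a W (dm f) \<and> hom C b W (dm g) \<and> f \<cdot> a = g \<cdot> b \<longrightarrow>
      (\<exists>!u. hom C u W P \<and> p \<cdot> u = a \<and> q \<cdot> u = b)"
    using pb unfolding is_pullback_def by blast
  have "\<exists>!u. hom C u (dm a) P \<and> p \<cdot> u = a \<and> q \<cdot> u = b"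
    by (rule U[rule_format]) (use assms in \<open>simp add: hom_def\<close>)
  then show ?thesis by (simp add: hom_def)
qed

lemma pb_pair:
  assumes pb: "is_pullback C f g P p q" and "cd a = dm f" "cd b = dm g" "dm a = dm b" "f \<cdot> a = g \<cdot> b"
  shows "dm (pb_pair C p q a b) = dm a" "cd (pb_pair C p q a b) = P"
    "p \<cdot> pb_pair C p q a b = a" "q \<cdot> pb_pair C p q a b = b"
proof -
  have "\<exists>!u. dm u = dm a \<and> cd u = dm p \<and> p \<cdot> u = a \<and> q \<cdot> u = b"
    using pullback_universal[OF assms] pullbackD(1)[OF pb] by simp
  from theI'[OF this, folded pb_pair_def]
  show "dm (pb_pair C p q a b) = dm a" "cd (pb_pair C p q a b) = P"
    "p \<cdot> pb_pair C p q a b = a" "q \<cdot> pb_pair C p q a b = b" using pullbackD(1)[OF pb] by auto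
qed

lemma pullback_ext:
  assumes pb: "is_pullback C f g P p q" and "cd u = P" "cd v = P" "dm u = dm v"
    "p \<cdot> u = p \<cdot> v" "q \<cdot> u = q \<cdot> v"
  shows "u = v"
proof -
  note b = pullbackD[OF pb]
  have "f \<cdot> (p \<cdot> u) = g \<cdot> (q \<cdot> u)" using comp_eq_extend[OF b(5)] b assms(2) by simp
  then have "\<exists>!w. dm w = dm u \<and> cd w = P \<and> p \<cdot> w = p \<cdot> u \<and> q \<cdot> w = q \<cdot> u"
    using pullback_universal[OF pb, of "p \<cdot> u" "q \<cdot> u"] b assms(2) by simp
  then show ?thesis using assms by metis
qed

lemma pb_pair_unique:
  assumes pb: "is_pullback C f g P p q" and "cd a = dm f" "cd b = dm g" "dm a = dm b" "f \<cdot> a = g \<cdot> b"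
    and "cd u = P" "dm u = dm a" "p \<cdot> u = a" "q \<cdot> u = b"
  shows "u = pb_pair C p q a b"
  using pullback_ext[OF pb] pb_pair[OF assms(1-5)] assms by metis

lemma pb_pair_comp:
  assumes pb: "is_pullback C f g P p q" and "cd a = dm f" "cd b = dm g" "dm a = dm b" "f \<cdot> a = g \<cdot> b"
    and "cd h = dm a"
  shows "pb_pair C p q a b \<cdot> h = pb_pair C p q (a \<cdot> h) (b \<cdot> h)"
proof (rule pb_pair_unique[OF pb])
  note b = pullbackD[OF pb] and u = pb_pair[OF assms(1-5)]
  show "p \<cdot> (pb_pair C p q a b \<cdot> h) = a \<cdot> h" "q \<cdot> (pb_pair C p q a b \<cdot> h) = b \<cdot> h"
    using comp_eq_extend[OF u(3)] comp_eq_extend[OF u(4)] u b assms by simp_all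
qed (use assms comp_eq_extend[OF assms(5)] pb_pair[OF assms(1-5)] pullbackD[OF pb] in simp_all)

lemma pullback_exists: "finitely_complete C \<Longrightarrow> cd f = cd g \<Longrightarrow> \<exists>P p q. is_pullback C f g P p q"
  unfolding finitely_complete_def by blast

lemma product_as_pullback:
  assumes fc: "finitely_complete C"
  obtains Pr p1 p2 t1 t2 where "is_pullback C t1 t2 Pr p1 p2" "dm t1 = X" "dm t2 = Y"
    "\<And>a b. cd a = X \<Longrightarrow> cd b = Y \<Longrightarrow> dm a = dm b \<Longrightarrow> t1 \<cdot> a = t2 \<cdot> b"
proof -
  obtain T where T: "is_terminal C T" using fc unfolding finitely_complete_def by blast
  obtain t1 where t1: "dm t1 = X" "cd t1 = T" using terminal_arrow_exists[OF T] by blast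
  obtain t2 where t2: "dm t2 = Y" "cd t2 = T" using terminal_arrow_exists[OF T] by blast
  obtain Pr p1 p2 where pb: "is_pullback C t1 t2 Pr p1 p2" using pullback_exists[OF fc] t1 t2 by metis
  show ?thesis by (rule that[OF pb t1(1) t2(1)], rule terminal_arrow_unique[OF T]) (use t1 t2 in auto)
qed

lemma pullback_mono:
  assumes pb: "is_pullback C f g P p q" and m: "mono C g"
  shows "mono C p"
proof (rule monoI)
  fix a b assume a: "cd a = dm p" "cd b = dm p" "dm a = dm b" "p \<cdot> a = p \<cdot> b"
  note B = pullbackD[OF pb]
  have "g \<cdot> (q \<cdot> a) = f \<cdot> (p \<cdot> a)" by (rule comp_eq_extend2) (use B a in auto)
  also have "\<dots> = f \<cdot> (p \<cdot> b)" using a by simp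
  also have "\<dots> = g \<cdot> (q \<cdot> b)" by (rule comp_eq_extend2) (use B a in auto)
  finally have "g \<cdot> (q \<cdot> a) = g \<cdot> (q \<cdot> b)" .
  then have "q \<cdot> a = q \<cdot> b" using monoD[OF m] a B by simp
  then show "a = b" using pullback_ext[OF pb] a B by simp
qed

section \<open>Jointly extremally epic pairs and the \<Sigma>-Mal'tsev property\<close>

lemma jointly_extremally_epicD:
  assumes "jointly_extremally_epic C a b Z" and "mono C m" "cd m = Z"
    and "dm a' = dm a" "cd a' = dm m" "m \<cdot> a' = a" and "dm b' = dm b" "cd b' = dm m" "m \<cdot> b' = b"
  shows "iso C m"
  using assms unfolding jointly_extremally_epic_def hom_def by blast

lemma jointly_extremally_epic_lift:
  assumes fc: "finitely_complete C" and J: "jointly_extremally_epic C a b Z"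
    and n: "mono C n" and phi: "dm phi = Z" "cd phi = cd n"
    and a': "cd a' = dm n" "dm a' = dm a" "phi \<cdot> a = n \<cdot> a'"
    and b': "cd b' = dm n" "dm b' = dm b" "phi \<cdot> b = n \<cdot> b'"
  shows "\<exists>psi. dm psi = Z \<and> cd psi = dm n \<and> n \<cdot> psi = phi"
proof -
  have aZ: "cd a = Z" "cd b = Z" using J unfolding jointly_extremally_epic_def by auto
  obtain E e1 e2 where pe: "is_pullback C phi n E e1 e2" using pullback_exists[OF fc] phi by metis
  note BE = pullbackD[OF pe]
  have mono: "mono C e1" by (rule pullback_mono[OF pe n])
  note A = pb_pair[OF pe, of a a'] and Bq = pb_pair[OF pe, of b b']
  have "iso C e1" by (rule jointly_extremally_epicD[OF J mono _ _ _ A(3) _ _ Bq(3)])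
    (use BE a' b' aZ phi A Bq in auto)
  then obtain g where g: "cd g = dm e1" "dm g = cd e1" "g \<cdot> e1 = idm (dm e1)" "e1 \<cdot> g = idm (cd e1)"
    by (rule isoE)
  have "n \<cdot> (e2 \<cdot> g) = phi \<cdot> (e1 \<cdot> g)"
    using comp_eq_extend[OF BE(5)[symmetric], of g] comp_eq_extend[OF BE(5), of g] g BE by simp
  also have "\<dots> = phi" using g BE phi by simp
  finally show ?thesis using g BE phi by (intro exI[of _ "e2 \<cdot> g"]) simp
qed

lemma section_mono:
  assumes rm: "r \<cdot> m = idm (dm m)" and "cd m = dm r"
  shows "mono C m"
proof (rule monoI)
  fix x y assume xy: "cd x = dm m" "cd y = dm m" "dm x = dm y" "m \<cdot> x = m \<cdot> y"
  have "x = r \<cdot> (m \<cdot> x)" using comp_eq_extend[OF rm, of x] assms(2) xy(1) by simp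
  also have "\<dots> = y" using comp_eq_extend[OF rm, of y] assms(2) xy(2,4) by simp
  finally show "x = y" .
qed

text \<open>On a and b the pair (u, v) factors through the diagonal of cd u, which is a monomorphism.\<close>
lemma jointly_extremally_epic_cancel:
  assumes fc: "finitely_complete C" and J: "jointly_extremally_epic C a b Z"
    and u: "dm u = Z" "dm v = Z" "cd u = cd v" and ea: "u \<cdot> a = v \<cdot> a" and eb: "u \<cdot> b = v \<cdot> b"
  shows "u = v"
proof -
  have ab: "cd a = Z" "cd b = Z" using J unfolding jointly_extremally_epic_def by auto
  obtain Pr p1 p2 t1 t2 where pb: "is_pullback C t1 t2 Pr p1 p2" and t: "dm t1 = cd u" "dm t2 = cd u"
    and tt: "\<And>x y. cd x = cd u \<Longrightarrow> cd y = cd u \<Longrightarrow> dm x = dm y \<Longrightarrow> t1 \<cdot> x = t2 \<cdot> y"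
    using product_as_pullback[OF fc] by metis
  note B = pullbackD[OF pb]
  define \<Delta> where "\<Delta> = pb_pair C p1 p2 (idm (cd u)) (idm (cd u))"
  define phi where "phi = pb_pair C p1 p2 u v"
  have tu: "t1 \<cdot> idm (cd u) = t2 \<cdot> idm (cd u)" "t1 \<cdot> u = t2 \<cdot> v" by (rule tt; use u in simp)+
  have D: "dm \<Delta> = cd u" "cd \<Delta> = Pr" "p1 \<cdot> \<Delta> = idm (cd u)" "p2 \<cdot> \<Delta> = idm (cd u)"
    using pb_pair[OF pb _ _ _ tu(1), folded \<Delta>_def] t by simp_all
  have P: "dm phi = Z" "cd phi = Pr" "p1 \<cdot> phi = u" "p2 \<cdot> phi = v"
    using pb_pair[OF pb t(1)[symmetric] _ _ tu(2), folded phi_def] t(2) u by simp_all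
  have phi_diag: "phi \<cdot> c = \<Delta> \<cdot> (u \<cdot> c)" if c: "cd c = Z" "u \<cdot> c = v \<cdot> c" for c
  proof (rule pullback_ext[OF pb])
    have "p1 \<cdot> (phi \<cdot> c) = u \<cdot> c" "p2 \<cdot> (phi \<cdot> c) = u \<cdot> c"
      using comp_eq_extend[OF P(3), of c] comp_eq_extend[OF P(4), of c] P(1,2) B(1,2) c by simp_all
    moreover have "p1 \<cdot> (\<Delta> \<cdot> (u \<cdot> c)) = u \<cdot> c" "p2 \<cdot> (\<Delta> \<cdot> (u \<cdot> c)) = u \<cdot> c"
      using comp_eq_extend[OF D(3), of "u \<cdot> c"] comp_eq_extend[OF D(4), of "u \<cdot> c"] D(1,2) B(1,2) u(1) c(1)
      by simp_all
    ultimately show "p1 \<cdot> (phi \<cdot> c) = p1 \<cdot> (\<Delta> \<cdot> (u \<cdot> c))" "p2 \<cdot> (phi \<cdot> c) = p2 \<cdot> (\<Delta> \<cdot> (u \<cdot> c))"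
      by simp_all
  qed (use P(1,2) D(1,2) u(1) c(1) in simp_all)
  have mono: "mono C \<Delta>" by (rule section_mono[of p1]) (use D B in simp_all)
  have cd_phi: "cd phi = cd \<Delta>" using P D by simp
  have uc: "cd (u \<cdot> c) = dm \<Delta>" "dm (u \<cdot> c) = dm c" if "cd c = Z" for c using that u D by simp_all
  from jointly_extremally_epic_lift[OF fc J mono P(1) cd_phi uc[OF ab(1)] phi_diag[OF ab(1) ea]
      uc[OF ab(2)] phi_diag[OF ab(2) eb]]
  obtain \<psi> where \<psi>: "dm \<psi> = Z" "cd \<psi> = dm \<Delta>" "\<Delta> \<cdot> \<psi> = phi" by blast
  have "u = \<psi>" using comp_eq_extend[OF D(3), of \<psi>] \<psi>(2,3) P(3) D(1,2) B(1) by simp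
  moreover have "v = \<psi>" using comp_eq_extend[OF D(4), of \<psi>] \<psi>(2,3) P(4) D(1,2) B(2) by simp
  ultimately show ?thesis by simp
qed

lemma fibrationalD:
  assumes "fibrational C Sig" "(f, s) \<in> Sig" "cd h = cd f" "is_pullback C h f P f' h'"
    "dm s' = dm h" "cd s' = P" "f' \<cdot> s' = idm (dm h)" "h' \<cdot> s' = s \<cdot> h"
  shows "(f', s') \<in> Sig"
proof -
  have A: "\<forall>f s h P f' h' s'. (f, s) \<in> Sig \<and> Cod C h = Cod C f \<and> is_pullback C h f P f' h' \<and>
        hom C s' (Dom C h) P \<and> Cmp C f' s' = Idm C (Dom C h) \<and> Cmp C h' s' = Cmp C s h
        \<longrightarrow> (f', s') \<in> Sig" using assms(1) unfolding fibrational_def by (rule conjunct2[OF conjunct2])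
  show ?thesis by (rule A[rule_format, of f s h P f' h' s']) (use assms(2-8) in \<open>simp add: hom_def\<close>)
qed

lemma sigma_maltsev_sectionsE:
  assumes mal: "sigma_maltsev C Sig" and fib: "fibrational C Sig" and fs: "(f, s) \<in> Sig"
    and t: "dm t = cd g" "cd t = dm g" "g \<cdot> t = idm (cd g)" and gf: "cd g = cd f"
    and pb: "is_pullback C g f X' f' g'"
  obtains s' tb where "dm s' = dm g" "cd s' = X'" "f' \<cdot> s' = idm (dm g)" "g' \<cdot> s' = s \<cdot> g"
    and "dm tb = dm f" "cd tb = X'" "f' \<cdot> tb = t \<cdot> f" "g' \<cdot> tb = idm (dm f)"
    and "jointly_extremally_epic C s' tb X'"
proof -
  have "split_epi C f s" using fib fs unfolding fibrational_def by blast
  then have s: "dm s = cd f" "cd s = dm f" "f \<cdot> s = idm (cd f)" unfolding split_epi_def hom_def by auto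
  define s' where "s' = pb_pair C f' g' (idm (dm g)) (s \<cdot> g)"
  define tb where "tb = pb_pair C f' g' (t \<cdot> f) (idm (dm f))"
  have S': "dm s' = dm g" "cd s' = X'" "f' \<cdot> s' = idm (dm g)" "g' \<cdot> s' = s \<cdot> g"
    using pb_pair[OF pb, of "idm (dm g)" "s \<cdot> g", folded s'_def] comp_eq_extend[OF s(3)] s gf by auto
  have T': "dm tb = dm f" "cd tb = X'" "f' \<cdot> tb = t \<cdot> f" "g' \<cdot> tb = idm (dm f)"
    using pb_pair[OF pb, of "t \<cdot> f" "idm (dm f)", folded tb_def] comp_eq_extend[OF t(3)] t gf by auto
  have "jointly_extremally_epic C s' tb X'"
    using mal fs t gf pb S' T' unfolding sigma_maltsev_def split_epi_def hom_def by blast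
  with S' T' show ?thesis by (rule that)
qed

section \<open>Reflexive relations and kernel relations\<close>

lemma kernel_rel_swap: "kernel_rel C d K k0 k1 \<delta> \<Longrightarrow> kernel_rel C d K k1 k0 \<delta>"
  unfolding kernel_rel_def using pullback_sym by blast

lemma kernel_relD:
  assumes "kernel_rel C d K k0 k1 \<delta>"
  shows "is_pullback C d d K k0 k1" "dm k0 = K" "dm k1 = K" "cd k0 = dm d" "cd k1 = dm d"
    "d \<cdot> k0 = d \<cdot> k1" "dm \<delta> = dm d" "cd \<delta> = K" "k0 \<cdot> \<delta> = idm (dm d)" "k1 \<cdot> \<delta> = idm (dm d)"
  using assms pullbackD[of d d K k0 k1] unfolding kernel_rel_def hom_def by auto

lemma kernel_rel_exists:
  assumes fc: "finitely_complete C"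
  shows "\<exists>K k0 k1 \<delta>. kernel_rel C d K k0 k1 \<delta>"
proof -
  obtain K k0 k1 where pb: "is_pullback C d d K k0 k1" using pullback_exists[OF fc] by metis
  note p = pb_pair[OF pb, of "idm (dm d)" "idm (dm d)"]
  have "kernel_rel C d K k0 k1 (pb_pair C k0 k1 (idm (dm d)) (idm (dm d)))"
    unfolding kernel_rel_def hom_def using pb p by auto
  then show ?thesis by blast
qed

lemma kernel_rel_refl_rel:
  assumes k: "kernel_rel C d K k0 k1 \<delta>"
  shows "refl_rel C (dm d) K k0 k1 \<delta>"
proof -
  note B = kernel_relD[OF k]
  have rg: "refl_graph C (dm d) K k0 k1 \<delta>" unfolding refl_graph_def hom_def using B by auto
  have "mono C m" if "is_product C (dm d) (dm d) Pr p q" "hom C m K Pr" "p \<cdot> m = k0"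
    "q \<cdot> m = k1" for Pr p q m
  proof (rule monoI)
    fix a b assume h: "cd a = dm m" "cd b = dm m" "dm a = dm b" "m \<cdot> a = m \<cdot> b"
    have pq: "dm p = Pr" "dm q = Pr" using that unfolding is_product_def hom_def by auto
    have m: "dm m = K" "cd m = Pr" using that(2) unfolding hom_def by auto
    have "k0 \<cdot> a = p \<cdot> (m \<cdot> a)" using that(3) h m pq by (simp flip: that(3))
    also have "\<dots> = k0 \<cdot> b" using that(3) h m pq by (simp flip: that(3))
    finally have e0: "k0 \<cdot> a = k0 \<cdot> b" .
    have "k1 \<cdot> a = q \<cdot> (m \<cdot> a)" using that(4) h m pq by (simp flip: that(4))
    also have "q \<cdot> (m \<cdot> a) = k1 \<cdot> b" using that(4) h m pq by (simp flip: that(4))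
    finally have e1: "k1 \<cdot> a = k1 \<cdot> b" .
    show "a = b" using pullback_ext[OF B(1) _ _ _ e0 e1] h m by auto
  qed
  then show ?thesis unfolding refl_rel_def using rg by blast
qed

lemma product_from_pullback:
  assumes pb: "is_pullback C t1 t2 Pr p1 p2"
    and tt: "\<And>a b. cd a = dm t1 \<Longrightarrow> cd b = dm t2 \<Longrightarrow> dm a = dm b \<Longrightarrow> t1 \<cdot> a = t2 \<cdot> b"
  shows "is_product C (dm t1) (dm t2) Pr p1 p2"
proof -
  have U: "\<forall>W a b. hom C a W (dm t1) \<and> hom C b W (dm t2) \<and> t1 \<cdot> a = t2 \<cdot> b \<longrightarrow>
        (\<exists>!u. hom C u W Pr \<and> p1 \<cdot> u = a \<and> p2 \<cdot> u = b)"
    using pb unfolding is_pullback_def by blast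
  have H: "hom C p1 Pr (dm t1)" "hom C p2 Pr (dm t2)" using pb unfolding is_pullback_def by blast+
  show ?thesis unfolding is_product_def
  proof (intro conjI H allI impI)
    fix W a b assume "hom C a W (dm t1) \<and> hom C b W (dm t2)"
    then have c: "cd a = dm t1" "cd b = dm t2" "dm a = W" "dm b = W" unfolding hom_def by auto
    have "hom C a W (dm t1) \<and> hom C b W (dm t2) \<and> t1 \<cdot> a = t2 \<cdot> b"
      using c tt[OF c(1,2)] unfolding hom_def by simp
    then show "\<exists>!u. hom C u W Pr \<and> p1 \<cdot> u = a \<and> p2 \<cdot> u = b" using U by blast
  qed
qed

lemma refl_relD:
  assumes "refl_rel C X S d0 d1 s0"
  shows "dm d0 = S" "cd d0 = X" "dm d1 = S" "cd d1 = X" "dm s0 = X" "cd s0 = S"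
    "d0 \<cdot> s0 = idm X" "d1 \<cdot> s0 = idm X"
  using assms unfolding refl_rel_def refl_graph_def hom_def by auto

lemma refl_rel_pairing_mono:
  assumes fc: "finitely_complete C" and r: "refl_rel C X S d0 d1 s0"
  obtains t1 t2 Pr p1 p2 m where "is_pullback C t1 t2 Pr p1 p2"
    "\<And>a b. cd a = X \<Longrightarrow> cd b = X \<Longrightarrow> dm a = dm b \<Longrightarrow> t1 \<cdot> a = t2 \<cdot> b"
    "dm t1 = X" "dm t2 = X"
    "dm m = S" "cd m = Pr" "p1 \<cdot> m = d0" "p2 \<cdot> m = d1" "mono C m"
proof -
  note R = refl_relD[OF r]
  obtain Pr p1 p2 t1 t2 where pb: "is_pullback C t1 t2 Pr p1 p2" and t: "dm t1 = X" "dm t2 = X"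
    and tt: "\<And>a b. cd a = X \<Longrightarrow> cd b = X \<Longrightarrow> dm a = dm b \<Longrightarrow> t1 \<cdot> a = t2 \<cdot> b"
    using product_as_pullback[OF fc] by metis
  have prod: "is_product C X X Pr p1 p2" using product_from_pullback[OF pb] tt t by metis
  define m where "m = pb_pair C p1 p2 d0 d1"
  note M = pb_pair[OF pb, of d0 d1, folded m_def]
  have M: "dm m = S" "cd m = Pr" "p1 \<cdot> m = d0" "p2 \<cdot> m = d1" using M R t tt[of d0 d1] by auto
  have mono: "mono C m" using r prod M unfolding refl_rel_def hom_def by blast
  show ?thesis by (rule that[OF pb tt t M mono])
qed

lemma refl_rel_jointly_mono:
  assumes fc: "finitely_complete C" and r: "refl_rel C X S d0 d1 s0"
    and "cd u = S" "cd v = S" "dm u = dm v" "d0 \<cdot> u = d0 \<cdot> v" "d1 \<cdot> u = d1 \<cdot> v"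
  shows "u = v"
proof -
  obtain t1 t2 Pr p1 p2 m where pb: "is_pullback C t1 t2 Pr p1 p2"
    and M: "dm m = S" "cd m = Pr" "p1 \<cdot> m = d0" "p2 \<cdot> m = d1" and mono: "mono C m"
    by (rule refl_rel_pairing_mono[OF fc r])
  have "m \<cdot> u = m \<cdot> v"
    by (rule pullback_ext[OF pb])
      (use M pullbackD[OF pb] assms comp_eq_extend[OF M(3)] comp_eq_extend[OF M(4)] in auto)
  then show ?thesis using monoD[OF mono] M assms by auto
qed

text \<open>(x, y) : Z \<rightarrow> X \<times> X factors through the monomorphism S \<rightarrowtail> X \<times> X on a and b, hence globally.\<close>
lemma refl_rel_jointly_extremally_epic_lift:
  assumes fc: "finitely_complete C" and r: "refl_rel C X S d0 d1 s0"
    and J: "jointly_extremally_epic C a b Z"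
    and xy: "dm x = Z" "dm y = Z" "cd x = X" "cd y = X"
    and a': "dm a' = dm a" "cd a' = S" "d0 \<cdot> a' = x \<cdot> a" "d1 \<cdot> a' = y \<cdot> a"
    and b': "dm b' = dm b" "cd b' = S" "d0 \<cdot> b' = x \<cdot> b" "d1 \<cdot> b' = y \<cdot> b"
  obtains w where "dm w = Z" "cd w = S" "d0 \<cdot> w = x" "d1 \<cdot> w = y"
proof -
  note R = refl_relD[OF r]
  have ab: "cd a = Z" "cd b = Z" using J unfolding jointly_extremally_epic_def by auto
  obtain t1 t2 Pr p1 p2 m where pb: "is_pullback C t1 t2 Pr p1 p2"
    and tt: "\<And>a b. cd a = X \<Longrightarrow> cd b = X \<Longrightarrow> dm a = dm b \<Longrightarrow> t1 \<cdot> a = t2 \<cdot> b"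
    and t: "dm t1 = X" "dm t2 = X"
    and M: "dm m = S" "cd m = Pr" "p1 \<cdot> m = d0" "p2 \<cdot> m = d1" and mono: "mono C m"
    by (rule refl_rel_pairing_mono[OF fc r]) (rule that)
  note PB = pullbackD[OF pb]
  define phi where "phi = pb_pair C p1 p2 x y"
  have PH: "dm phi = Z" "cd phi = Pr" "p1 \<cdot> phi = x" "p2 \<cdot> phi = y"
    using pb_pair[OF pb, of x y, folded phi_def] tt[OF xy(3,4)] t xy by auto
  have restrict: "phi \<cdot> c = m \<cdot> c'" if c: "cd c = Z" "dm c' = dm c" "cd c' = S" "d0 \<cdot> c' = x \<cdot> c"
    "d1 \<cdot> c' = y \<cdot> c"
    for c c'
    by (rule pullback_ext[OF pb])
      (use c PH M PB comp_eq_extend[OF PH(3)] comp_eq_extend[OF PH(4)] comp_eq_extend[OF M(3)]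
        comp_eq_extend[OF M(4)] in simp_all)
  obtain w where w: "dm w = Z" "cd w = S" "m \<cdot> w = phi"
    using jointly_extremally_epic_lift[OF fc J mono PH(1) _ _ _ restrict[OF ab(1) a'] _ _ restrict[OF ab(2) b']]
      PH M a' b' by auto
  show ?thesis
    by (rule that[OF w(1,2)])
      (use comp_eq_extend[OF M(3), of w] comp_eq_extend[OF M(4), of w] w M PH PB in simp_all)
qed

text \<open>(d, s) is the pullback of (k0, \<delta>) along s, with comparison map (s d, 1) into R[d].\<close>
lemma sigma_split_epi_from_kernel:
  assumes fib: "fibrational C Sig" and k: "kernel_rel C d K k0 k1 \<delta>" and ks: "(k0, \<delta>) \<in> Sig"
    and s: "dm s = cd d" "cd s = dm d" "d \<cdot> s = idm (cd d)"
  shows "(d, s) \<in> Sig"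
proof -
  note B = kernel_relD[OF k]
  define h where "h = pb_pair C k0 k1 (s \<cdot> d) (idm (dm d))"
  have e: "d \<cdot> (s \<cdot> d) = d" using comp_eq_extend[OF s(3)] s by simp
  note H = pb_pair[OF B(1), of "s \<cdot> d" "idm (dm d)", folded h_def]
  have H: "dm h = dm d" "cd h = K" "k0 \<cdot> h = s \<cdot> d" "k1 \<cdot> h = idm (dm d)" using H s B e by auto
  have pb: "is_pullback C s k0 (dm d) d h"
  proof (rule pullbackI)
    fix a b assume ab: "cd a = dm s" "cd b = dm k0" "dm a = dm b" "s \<cdot> a = k0 \<cdot> b"
    have "d \<cdot> (k1 \<cdot> b) = d \<cdot> (k0 \<cdot> b)" using comp_eq_extend2[OF B(6)[symmetric]] ab B by simp
    also have "\<dots> = d \<cdot> (s \<cdot> a)" using ab by simp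
    also have "\<dots> = a" using comp_eq_extend[OF s(3)] ab(1) s by simp
    finally have da: "d \<cdot> (k1 \<cdot> b) = a" .
    have hb: "h \<cdot> (k1 \<cdot> b) = b"
    proof (rule pullback_ext[OF B(1)])
      show "k0 \<cdot> (h \<cdot> (k1 \<cdot> b)) = k0 \<cdot> b"
        using comp_eq_extend[OF H(3)] ab B H s da by (simp flip: ab(4))
      show "k1 \<cdot> (h \<cdot> (k1 \<cdot> b)) = k1 \<cdot> b"
        using comp_eq_extend[OF H(4)] ab B H s by simp
    qed (use ab B H in auto)
    show "\<exists>u. dm u = dm a \<and> cd u = dm d \<and> d \<cdot> u = a \<and> h \<cdot> u = b"
      by (rule exI[of _ "k1 \<cdot> b"]) (use ab B H da hb in auto)
  next
    fix u v assume uv: "cd u = dm d" "cd v = dm d" "dm u = dm v" "d \<cdot> u = d \<cdot> v" "h \<cdot> u = h \<cdot> v"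
    have "u = k1 \<cdot> (h \<cdot> u)" using comp_eq_extend[OF H(4)] uv(1) H B by simp
    also have "\<dots> = k1 \<cdot> (h \<cdot> v)" using uv(5) by simp
    also have "\<dots> = v" using comp_eq_extend[OF H(4)] uv(2) H B by simp
    finally show "u = v" .
  qed (use s B H in auto)
  have hs: "h \<cdot> s = \<delta> \<cdot> s"
    by (rule pullback_ext[OF B(1)])
      (use comp_eq_extend[OF H(3)] comp_eq_extend[OF H(4)] comp_eq_extend[OF B(9)] comp_eq_extend[OF B(10)]
        s B H e in \<open>auto simp: comp_eq_extend[OF s(3)]\<close>)
  show ?thesis by (rule fibrationalD[OF fib ks _ pb]) (use s B H hs in auto)
qed

lemma kernel_is_sigma_relD:
  assumes "kernel_is_sigma_rel C Sig d" and k: "kernel_rel C d K k0 k1 \<delta>"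
  shows "(k0, \<delta>) \<in> Sig" and "(k1, \<delta>) \<in> Sig"
  using assms kernel_rel_swap[OF k] unfolding kernel_is_sigma_rel_def sigma_rel_def by blast+

lemma kernel_sigma_rel_of_pullback:
  assumes fib: "fibrational C Sig" and sig: "(d0, s0) \<in> Sig" and rg: "refl_graph C X0 X1 d0 d1 s0"
    and k: "kernel_rel C d0 K k0 k1 \<delta>" and pb: "is_pullback C d1 d0 K k0 c" and c: "c \<cdot> \<delta> = s0 \<cdot> d1"
  shows "sigma_rel C Sig (dm d0) K k0 k1 \<delta>"
proof -
  have "(k0, \<delta>) \<in> Sig"
    by (rule fibrationalD[OF fib sig _ pb])
      (use rg kernel_relD[OF k] c in \<open>auto simp: refl_graph_def hom_def\<close>)
  then show ?thesis unfolding sigma_rel_def using kernel_rel_refl_rel[OF k] by blast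
qed

section \<open>Equivalence relations\<close>

lemma equiv_rel_symE:
  assumes "equiv_rel C X S d0 d1 s0"
  obtains \<sigma> where "dm \<sigma> = S" "cd \<sigma> = S" "d0 \<cdot> \<sigma> = d1" "d1 \<cdot> \<sigma> = d0"
  using assms unfolding equiv_rel_def hom_def by blast

lemma equiv_rel_transE:
  assumes fc: "finitely_complete C" and e: "equiv_rel C X S d0 d1 s0"
    and ab: "cd a = S" "cd b = S" "dm a = dm b" "d1 \<cdot> a = d0 \<cdot> b"
  obtains w where "dm w = dm a" "cd w = S" "d0 \<cdot> w = d0 \<cdot> a" "d1 \<cdot> w = d1 \<cdot> b"
proof -
  have R: "refl_rel C X S d0 d1 s0" using e unfolding equiv_rel_def by blast
  note R = refl_relD[OF R]
  obtain P \<pi>1 \<pi>2 where pb: "is_pullback C d1 d0 P \<pi>1 \<pi>2" using pullback_exists[OF fc] R by metis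
  obtain \<tau> where \<tau>: "dm \<tau> = P" "cd \<tau> = S" "d0 \<cdot> \<tau> = d0 \<cdot> \<pi>1" "d1 \<cdot> \<tau> = d1 \<cdot> \<pi>2"
    using e pb unfolding equiv_rel_def hom_def by blast
  note Q = pb_pair[OF pb, of a b] pullbackD[OF pb]
  show ?thesis
  proof (rule that[of "\<tau> \<cdot> pb_pair C \<pi>1 \<pi>2 a b"])
    show "d0 \<cdot> (\<tau> \<cdot> pb_pair C \<pi>1 \<pi>2 a b) = d0 \<cdot> a" "d1 \<cdot> (\<tau> \<cdot> pb_pair C \<pi>1 \<pi>2 a b) = d1 \<cdot> b"
      using comp_eq_extend[OF \<tau>(3)] comp_eq_extend[OF \<tau>(4)] \<tau> Q R ab
      by (simp_all add: comp_eq_extend[OF Q(3)] comp_eq_extend[OF Q(4)])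
  qed (use Q \<tau> R ab in simp_all)
qed

text \<open>For an equivalence relation, R[d0] is the pullback of d0 along d1: the pair (x S y, x S z)
  is determined by x S y together with y S z.\<close>
lemma equiv_rel_kernel_pullback:
  assumes fc: "finitely_complete C" and e: "equiv_rel C X S d0 d1 s0"
    and k: "kernel_rel C d0 K k0 k1 \<delta>"
  obtains c where "is_pullback C d1 d0 K k0 c" "c \<cdot> \<delta> = s0 \<cdot> d1"
proof -
  have r: "refl_rel C X S d0 d1 s0" using e unfolding equiv_rel_def by blast
  note R = refl_relD[OF r] and B = kernel_relD[OF k]
  note jm = refl_rel_jointly_mono[OF fc r]
  obtain \<sigma> where \<sigma>: "dm \<sigma> = S" "cd \<sigma> = S" "d0 \<cdot> \<sigma> = d1" "d1 \<cdot> \<sigma> = d0"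
    by (rule equiv_rel_symE[OF e])
  have "d1 \<cdot> (\<sigma> \<cdot> k0) = d0 \<cdot> k1" using comp_eq_extend[OF \<sigma>(4)] B R \<sigma> by simp
  then obtain c where C: "dm c = K" "cd c = S" "d0 \<cdot> c = d1 \<cdot> k0" "d1 \<cdot> c = d1 \<cdot> k1"
    using equiv_rel_transE[OF fc e, of "\<sigma> \<cdot> k0" k1] B R \<sigma> comp_eq_extend[OF \<sigma>(3)] by auto
  have "is_pullback C d1 d0 K k0 c"
  proof (rule pullbackI)
    fix a b assume ab: "cd a = dm d1" "cd b = dm d0" "dm a = dm b" "d1 \<cdot> a = d0 \<cdot> b"
    obtain t where T: "dm t = dm a" "cd t = S" "d0 \<cdot> t = d0 \<cdot> a" "d1 \<cdot> t = d1 \<cdot> b"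
      by (rule equiv_rel_transE[OF fc e, of a b]) (use ab R in auto)
    define u where "u = pb_pair C k0 k1 a t"
    note U = pb_pair[OF B(1), of a t, folded u_def]
    have U: "dm u = dm a" "cd u = K" "k0 \<cdot> u = a" "k1 \<cdot> u = t" using U ab R T B by auto
    have "c \<cdot> u = b"
      by (rule jm) (use ab R U C T B comp_eq_extend[OF C(3)] comp_eq_extend[OF C(4)] in simp_all)
    then show "\<exists>u. dm u = dm a \<and> cd u = K \<and> k0 \<cdot> u = a \<and> c \<cdot> u = b" using U by blast
  next
    fix u v assume uv: "cd u = K" "cd v = K" "dm u = dm v" "k0 \<cdot> u = k0 \<cdot> v" "c \<cdot> u = c \<cdot> v"
    have "d0 \<cdot> (k1 \<cdot> u) = d0 \<cdot> (k0 \<cdot> u)" by (rule comp_eq_extend2[OF B(6)[symmetric]]) (use B R uv in auto)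
    also have "\<dots> = d0 \<cdot> (k1 \<cdot> v)" using uv(4) comp_eq_extend2[OF B(6), of v] B R uv by simp
    finally have a: "d0 \<cdot> (k1 \<cdot> u) = d0 \<cdot> (k1 \<cdot> v)" .
    have "d1 \<cdot> (k1 \<cdot> u) = d1 \<cdot> (c \<cdot> u)" by (rule comp_eq_extend2[OF C(4)[symmetric]]) (use B R uv C in auto)
    also have "\<dots> = d1 \<cdot> (k1 \<cdot> v)" using uv(5) comp_eq_extend2[OF C(4), of v] B R uv C by simp
    finally have b: "d1 \<cdot> (k1 \<cdot> u) = d1 \<cdot> (k1 \<cdot> v)" .
    have "k1 \<cdot> u = k1 \<cdot> v" by (rule jm) (use a b uv B R in auto)
    then show "u = v" using pullback_ext[OF B(1)] uv by auto
  qed (use R B C in auto)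
  moreover have "c \<cdot> \<delta> = s0 \<cdot> d1"
    by (rule jm) (use R B C comp_eq_extend[OF C(3)] comp_eq_extend[OF C(4)] comp_eq_extend[OF R(7)]
        comp_eq_extend[OF R(8)] in auto)
  ultimately show ?thesis by (rule that)
qed

lemma sigma_equiv_rel_kernel_sigma:
  assumes fc: "finitely_complete C" and fib: "fibrational C Sig"
    and se: "sigma_equiv_rel C Sig X S d0 d1 s0"
  shows "kernel_is_sigma_rel C Sig d0"
  unfolding kernel_is_sigma_rel_def
proof (intro allI impI)
  fix K k0 k1 \<delta> assume k: "kernel_rel C d0 K k0 k1 \<delta>"
  have e: "equiv_rel C X S d0 d1 s0" and sig: "(d0, s0) \<in> Sig"
    using se unfolding sigma_equiv_rel_def by blast+
  have rg: "refl_graph C X S d0 d1 s0" using e unfolding equiv_rel_def refl_rel_def by blast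
  obtain c where "is_pullback C d1 d0 K k0 c" "c \<cdot> \<delta> = s0 \<cdot> d1"
    by (rule equiv_rel_kernel_pullback[OF fc e k])
  then show "sigma_rel C Sig (dm d0) K k0 k1 \<delta>" by (rule kernel_sigma_rel_of_pullback[OF fib sig rg k])
qed

end

text \<open>Difunctionality of S, phrased on generalised elements: x' S y, x S y and x S y' imply x' S y'.\<close>
definition difunctional :: "('o,'m) cat \<Rightarrow> 'o \<Rightarrow> 'm \<Rightarrow> 'm \<Rightarrow> bool" where
  "difunctional C S d0 d1 \<longleftrightarrow>
     (\<forall>a b q. Cod C a = S \<and> Cod C b = S \<and> Cod C q = S \<and> Dom C b = Dom C a \<and> Dom C q = Dom C a \<and>
        Cmp C d1 a = Cmp C d1 b \<and> Cmp C d0 a = Cmp C d0 q \<longrightarrow>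
        (\<exists>w. Dom C w = Dom C a \<and> Cod C w = S \<and> Cmp C d0 w = Cmp C d0 b \<and> Cmp C d1 w = Cmp C d1 q))"

context cat_context begin

lemma difunctionalD:
  assumes "difunctional C S d0 d1"
    and "cd a = S" "cd b = S" "cd q = S" "dm b = dm a" "dm q = dm a" "d1 \<cdot> a = d1 \<cdot> b" "d0 \<cdot> a = d0 \<cdot> q"
  obtains w where "dm w = dm a" "cd w = S" "d0 \<cdot> w = d0 \<cdot> b" "d1 \<cdot> w = d1 \<cdot> q"
  using assms unfolding difunctional_def by blast

lemma difunctional_refl_rel_equiv_rel:
  assumes r: "refl_rel C X S d0 d1 s0" and dif: "difunctional C S d0 d1"
  shows "equiv_rel C X S d0 d1 s0"
proof -
  note R = refl_relD[OF r]
  have s0d: "d0 \<cdot> (s0 \<cdot> h) = h" "d1 \<cdot> (s0 \<cdot> h) = h" if "cd h = X" for h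
    using comp_eq_extend[OF R(7)] comp_eq_extend[OF R(8)] R that by auto
  obtain \<sigma> where "dm \<sigma> = S" "cd \<sigma> = S" "d0 \<cdot> \<sigma> = d1" "d1 \<cdot> \<sigma> = d0"
    by (rule difunctionalD[OF dif, of "idm S" "s0 \<cdot> d1" "s0 \<cdot> d0"]) (use R s0d in auto)
  moreover have "\<exists>\<tau>. hom C \<tau> P S \<and> d0 \<cdot> \<tau> = d0 \<cdot> p \<and> d1 \<cdot> \<tau> = d1 \<cdot> q"
    if pq: "is_pullback C d1 d0 P p q" for P p q
  proof -
    note Q = pullbackD[OF pq]
    obtain w where "dm w = P" "cd w = S" "d0 \<cdot> w = d0 \<cdot> p" "d1 \<cdot> w = d1 \<cdot> q"
      by (rule difunctionalD[OF dif, of "s0 \<cdot> (d0 \<cdot> q)" p q]) (use R Q s0d in auto)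
    then show ?thesis unfolding hom_def by blast
  qed
  ultimately show ?thesis using r unfolding equiv_rel_def hom_def by blast
qed

text \<open>X' is the object of triples b R[d1] a R[d0] q; by the \<Sigma>-Mal'tsev property the pair (d0 b, d1 q)
  lies in S because it does on the two canonical sections, where it is (d0 a, d1 a) resp. (d0 q, d1 q).\<close>
lemma kernel_sigma_rel_difunctional_map:
  assumes fc: "finitely_complete C" and fib: "fibrational C Sig" and mal: "sigma_maltsev C Sig"
    and r: "refl_rel C X S d0 d1 s0" and ks: "kernel_is_sigma_rel C Sig d0"
    and k: "kernel_rel C d0 K k0 k1 \<delta>" and l: "kernel_rel C d1 L l0 l1 \<epsilon>"
    and pbX: "is_pullback C l0 k0 X' f' g'"
  obtains D where "dm D = X'" "cd D = S" "d0 \<cdot> D = d0 \<cdot> (l1 \<cdot> f')" "d1 \<cdot> D = d1 \<cdot> (k1 \<cdot> g')"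
proof -
  note R = refl_relD[OF r] and KB = kernel_relD[OF k] and LB = kernel_relD[OF l] and XB = pullbackD[OF pbX]
  obtain s' tb where S': "dm s' = L" "cd s' = X'" "f' \<cdot> s' = idm L" "g' \<cdot> s' = \<delta> \<cdot> l0"
    and T': "dm tb = K" "cd tb = X'" "f' \<cdot> tb = \<epsilon> \<cdot> k0" "g' \<cdot> tb = idm K"
    and J: "jointly_extremally_epic C s' tb X'"
    by (rule sigma_maltsev_sectionsE[OF mal fib kernel_is_sigma_relD(1)[OF ks k] _ _ _ _ pbX])
      (use LB KB R in auto)
  show ?thesis
  proof (rule refl_rel_jointly_extremally_epic_lift[OF fc r J, of "d0 \<cdot> (l1 \<cdot> f')" "d1 \<cdot> (k1 \<cdot> g')" l1 k1])
    show "d1 \<cdot> l1 = (d1 \<cdot> (k1 \<cdot> g')) \<cdot> s'"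
      using comp_eq_extend[OF S'(4)] comp_eq_extend[OF KB(10)] S' XB KB LB R by simp
    show "d0 \<cdot> k1 = (d0 \<cdot> (l1 \<cdot> f')) \<cdot> tb"
      using comp_eq_extend[OF T'(3)] comp_eq_extend[OF LB(10)] T' XB KB LB R by simp
  qed (use S' T' XB KB LB R comp_eq_extend[OF S'(3)] comp_eq_extend[OF T'(4)] that in simp_all)
qed

lemma kernel_sigma_rel_difunctional:
  assumes fc: "finitely_complete C" and fib: "fibrational C Sig" and mal: "sigma_maltsev C Sig"
    and r: "refl_rel C X S d0 d1 s0" and ks: "kernel_is_sigma_rel C Sig d0"
  shows "difunctional C S d0 d1"
  unfolding difunctional_def
proof (intro allI impI)
  fix a b q
  assume "cd a = S \<and> cd b = S \<and> cd q = S \<and> dm b = dm a \<and> dm q = dm a \<and> d1 \<cdot> a = d1 \<cdot> b \<and> d0 \<cdot> a = d0 \<cdot> q"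
  then have ab: "cd a = S" "cd b = S" "cd q = S" "dm b = dm a" "dm q = dm a" "d1 \<cdot> a = d1 \<cdot> b"
    "d0 \<cdot> a = d0 \<cdot> q" by auto
  note R = refl_relD[OF r]
  obtain K k0 k1 \<delta> where k: "kernel_rel C d0 K k0 k1 \<delta>" using kernel_rel_exists[OF fc] by blast
  obtain L l0 l1 \<epsilon> where l: "kernel_rel C d1 L l0 l1 \<epsilon>" using kernel_rel_exists[OF fc] by blast
  note KB = kernel_relD[OF k] and LB = kernel_relD[OF l]
  obtain X' f' g' where pbX: "is_pullback C l0 k0 X' f' g'" using pullback_exists[OF fc] KB LB R by metis
  note XB = pullbackD[OF pbX]
  obtain D where D: "dm D = X'" "cd D = S" "d0 \<cdot> D = d0 \<cdot> (l1 \<cdot> f')" "d1 \<cdot> D = d1 \<cdot> (k1 \<cdot> g')"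
    by (rule kernel_sigma_rel_difunctional_map[OF fc fib mal r ks k l pbX])
  define x where "x = pb_pair C l0 l1 a b"
  have X: "dm x = dm a" "cd x = L" "l0 \<cdot> x = a" "l1 \<cdot> x = b"
    using pb_pair[OF LB(1), of a b, folded x_def] ab R by auto
  define y where "y = pb_pair C k0 k1 a q"
  have Y: "dm y = dm a" "cd y = K" "k0 \<cdot> y = a" "k1 \<cdot> y = q"
    using pb_pair[OF KB(1), of a q, folded y_def] ab R by auto
  define z where "z = pb_pair C f' g' x y"
  have Z: "dm z = dm a" "cd z = X'" "f' \<cdot> z = x" "g' \<cdot> z = y"
    using pb_pair[OF pbX, of x y, folded z_def] X Y LB KB by auto
  have "d0 \<cdot> (D \<cdot> z) = d0 \<cdot> b"
    using comp_eq_extend[OF D(3)] comp_eq_extend[OF Z(3)] Z X D R LB XB by simp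
  moreover have "d1 \<cdot> (D \<cdot> z) = d1 \<cdot> q"
    using comp_eq_extend[OF D(4)] comp_eq_extend[OF Z(4)] Z Y D R KB XB by simp
  ultimately show "\<exists>w. dm w = dm a \<and> cd w = S \<and> d0 \<cdot> w = d0 \<cdot> b \<and> d1 \<cdot> w = d1 \<cdot> q"
    using D Z by (intro exI[of _ "D \<cdot> z"]) auto
qed

lemma kernel_sigma_rel_sigma_equiv_rel:
  assumes fc: "finitely_complete C" and fib: "fibrational C Sig" and mal: "sigma_maltsev C Sig"
    and r: "refl_rel C X S d0 d1 s0" and ks: "kernel_is_sigma_rel C Sig d0"
  shows "sigma_equiv_rel C Sig X S d0 d1 s0"
proof -
  obtain K k0 k1 \<delta> where k: "kernel_rel C d0 K k0 k1 \<delta>" using kernel_rel_exists[OF fc] by blast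
  have "(d0, s0) \<in> Sig"
    by (rule sigma_split_epi_from_kernel[OF fib k kernel_is_sigma_relD(1)[OF ks k]])
      (use refl_relD[OF r] in auto)
  then show ?thesis
    unfolding sigma_equiv_rel_def
    using difunctional_refl_rel_equiv_rel[OF r kernel_sigma_rel_difunctional[OF fc fib mal r ks]] by blast
qed

end

section \<open>Internal groupoids\<close>

locale internal_groupoid = cat_context C for C :: "('o,'m) cat" +
  fixes X0 X1 d0 d1 s0 P \<pi>1 \<pi>2 mu i
  assumes fc: "finitely_complete C"
    and rg: "refl_graph C X0 X1 d0 d1 s0"
    and pb: "is_pullback C d1 d0 P \<pi>1 \<pi>2"
    and mu_hom: "hom C mu P X1" "Cmp C d0 mu = Cmp C d0 \<pi>1" "Cmp C d1 mu = Cmp C d1 \<pi>2"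
    and i_hom: "hom C i X1 X1" "Cmp C d0 i = d1" "Cmp C d1 i = d0"
    and unit_left_ax: "\<forall>e. hom C e X1 P \<and> Cmp C \<pi>1 e = Cmp C s0 d0 \<and> Cmp C \<pi>2 e = Idm C X1
           \<longrightarrow> Cmp C mu e = Idm C X1"
    and unit_right_ax: "\<forall>e. hom C e X1 P \<and> Cmp C \<pi>1 e = Idm C X1 \<and> Cmp C \<pi>2 e = Cmp C s0 d1
           \<longrightarrow> Cmp C mu e = Idm C X1"
    and inv_right_ax: "\<forall>e. hom C e X1 P \<and> Cmp C \<pi>1 e = Idm C X1 \<and> Cmp C \<pi>2 e = i
           \<longrightarrow> Cmp C mu e = Cmp C s0 d0"
    and inv_left_ax: "\<forall>e. hom C e X1 P \<and> Cmp C \<pi>1 e = i \<and> Cmp C \<pi>2 e = Idm C X1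
           \<longrightarrow> Cmp C mu e = Cmp C s0 d1"
    and assoc_ax: "\<forall>Q q1 q2 u v. is_pullback C \<pi>2 \<pi>1 Q q1 q2 \<and>
           hom C u Q P \<and> Cmp C \<pi>1 u = Cmp C mu q1 \<and> Cmp C \<pi>2 u = Cmp C \<pi>2 q2 \<and>
           hom C v Q P \<and> Cmp C \<pi>1 v = Cmp C \<pi>1 q1 \<and> Cmp C \<pi>2 v = Cmp C mu q2
           \<longrightarrow> Cmp C mu u = Cmp C mu v"
begin

lemma graph: "dm d0 = X1" "cd d0 = X0" "dm d1 = X1" "cd d1 = X0" "dm s0 = X0" "cd s0 = X1"
    "d0 \<cdot> s0 = idm X0" "d1 \<cdot> s0 = idm X0"
  using rg unfolding refl_graph_def hom_def by auto

lemmas pairsD = pullbackD[OF pb]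

lemma mu_i_hom: "dm mu = P" "cd mu = X1" "dm i = X1" "cd i = X1"
  using mu_hom i_hom unfolding hom_def by auto

text \<open>gcomp a b composes generalised arrows, a followed by b (defined when d1 a = d0 b). The locale
  assumptions are the clauses of is_groupoid.\<close>
definition gcomp where "gcomp a b = mu \<cdot> pb_pair C \<pi>1 \<pi>2 a b"

lemma pair:
  assumes "cd a = X1" "cd b = X1" "dm a = dm b" "d1 \<cdot> a = d0 \<cdot> b"
  shows "dm (pb_pair C \<pi>1 \<pi>2 a b) = dm a" "cd (pb_pair C \<pi>1 \<pi>2 a b) = P"
    "\<pi>1 \<cdot> pb_pair C \<pi>1 \<pi>2 a b = a" "\<pi>2 \<cdot> pb_pair C \<pi>1 \<pi>2 a b = b"
  using pb_pair[OF pb, of a b] assms graph by auto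

lemma gcomp:
  assumes "cd a = X1" "cd b = X1" "dm a = dm b" "d1 \<cdot> a = d0 \<cdot> b"
  shows "dm (gcomp a b) = dm a" "cd (gcomp a b) = X1" "d0 \<cdot> gcomp a b = d0 \<cdot> a" "d1 \<cdot> gcomp a b = d1 \<cdot> b"
proof -
  note Q = pair[OF assms]
  show "dm (gcomp a b) = dm a" "cd (gcomp a b) = X1" unfolding gcomp_def using Q mu_i_hom by auto
  show "d0 \<cdot> gcomp a b = d0 \<cdot> a" unfolding gcomp_def
    using comp_eq_extend[OF mu_hom(2)] comp_eq_extend[OF Q(3)] Q mu_i_hom pairsD graph by simp
  show "d1 \<cdot> gcomp a b = d1 \<cdot> b" unfolding gcomp_def
    using comp_eq_extend[OF mu_hom(3)] comp_eq_extend[OF Q(4)] Q mu_i_hom pairsD graph by simp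
qed

lemma pair_comp:
  assumes "cd a = X1" "cd b = X1" "dm a = dm b" "d1 \<cdot> a = d0 \<cdot> b" "cd h = dm a"
  shows "pb_pair C \<pi>1 \<pi>2 a b \<cdot> h = pb_pair C \<pi>1 \<pi>2 (a \<cdot> h) (b \<cdot> h)"
  by (rule pb_pair_comp[OF pb]) (use assms graph in auto)

lemma gcomp_comp:
  assumes "cd a = X1" "cd b = X1" "dm a = dm b" "d1 \<cdot> a = d0 \<cdot> b" "cd h = dm a"
  shows "gcomp a b \<cdot> h = gcomp (a \<cdot> h) (b \<cdot> h)"
  unfolding gcomp_def using pair_comp[OF assms] pair[OF assms(1-4)] assms mu_i_hom by simp

lemma gcomp_units_inverses:
  "gcomp (s0 \<cdot> d0) (idm X1) = idm X1" "gcomp (idm X1) (s0 \<cdot> d1) = idm X1"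
  "gcomp (idm X1) i = s0 \<cdot> d0" "gcomp i (idm X1) = s0 \<cdot> d1"
proof -
  have s: "cd (s0 \<cdot> d0) = X1" "cd (s0 \<cdot> d1) = X1" "d1 \<cdot> (s0 \<cdot> d0) = d0" "d0 \<cdot> (s0 \<cdot> d1) = d1"
    using comp_eq_extend[OF graph(8)] comp_eq_extend[OF graph(7)] graph by auto
  note P1 = pair[of "s0 \<cdot> d0" "idm X1"] and P2 = pair[of "idm X1" "s0 \<cdot> d1"]
    and P3 = pair[of "idm X1" i] and P4 = pair[of i "idm X1"]
  show "gcomp (s0 \<cdot> d0) (idm X1) = idm X1" unfolding gcomp_def
    using unit_left_ax P1 s graph unfolding hom_def by simp
  show "gcomp (idm X1) (s0 \<cdot> d1) = idm X1" unfolding gcomp_def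
    using unit_right_ax P2 s graph unfolding hom_def by simp
  show "gcomp (idm X1) i = s0 \<cdot> d0" unfolding gcomp_def
    using inv_right_ax P3 i_hom mu_i_hom graph unfolding hom_def by simp
  show "gcomp i (idm X1) = s0 \<cdot> d1" unfolding gcomp_def
    using inv_left_ax P4 i_hom mu_i_hom graph unfolding hom_def by simp
qed

lemma gcomp_s0_left: "cd a = X1 \<Longrightarrow> gcomp (s0 \<cdot> (d0 \<cdot> a)) a = a"
  using gcomp_comp[of "s0 \<cdot> d0" "idm X1" a] gcomp_units_inverses(1) comp_eq_extend[OF graph(8)] graph
    by simp

lemma gcomp_s0_right: "cd a = X1 \<Longrightarrow> gcomp a (s0 \<cdot> (d1 \<cdot> a)) = a"
  using gcomp_comp[of "idm X1" "s0 \<cdot> d1" a] gcomp_units_inverses(2) comp_eq_extend[OF graph(7)] graph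
    by simp

lemma gcomp_inv_right: "cd a = X1 \<Longrightarrow> gcomp a (i \<cdot> a) = s0 \<cdot> (d0 \<cdot> a)"
  using gcomp_comp[of "idm X1" i a] gcomp_units_inverses(3) i_hom mu_i_hom graph by simp

lemma gcomp_inv_left: "cd a = X1 \<Longrightarrow> gcomp (i \<cdot> a) a = s0 \<cdot> (d1 \<cdot> a)"
  using gcomp_comp[of i "idm X1" a] gcomp_units_inverses(4) i_hom mu_i_hom graph by simp

lemma pair_pullbackD:
  assumes pq: "is_pullback C \<pi>2 \<pi>1 Q q1 q2"
  shows "cd (mu \<cdot> q1) = X1" "cd (\<pi>2 \<cdot> q2) = X1" "cd (\<pi>1 \<cdot> q1) = X1" "cd (mu \<cdot> q2) = X1"
    "dm (mu \<cdot> q1) = Q" "dm (\<pi>2 \<cdot> q2) = Q" "dm (\<pi>1 \<cdot> q1) = Q" "dm (mu \<cdot> q2) = Q"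
    "d1 \<cdot> (mu \<cdot> q1) = d0 \<cdot> (\<pi>2 \<cdot> q2)" "d1 \<cdot> (\<pi>1 \<cdot> q1) = d0 \<cdot> (mu \<cdot> q2)"
proof -
  note QB = pullbackD[OF pq]
  show "cd (mu \<cdot> q1) = X1" "cd (\<pi>2 \<cdot> q2) = X1" "cd (\<pi>1 \<cdot> q1) = X1" "cd (mu \<cdot> q2) = X1"
    "dm (mu \<cdot> q1) = Q" "dm (\<pi>2 \<cdot> q2) = Q" "dm (\<pi>1 \<cdot> q1) = Q" "dm (mu \<cdot> q2) = Q"
    using QB mu_i_hom pairsD graph by simp_all
  have "d1 \<cdot> (mu \<cdot> q1) = d1 \<cdot> (\<pi>2 \<cdot> q1)"
    by (rule comp_eq_extend2[OF mu_hom(3)]) (use mu_i_hom pairsD QB graph in simp_all)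
  also have "\<dots> = d1 \<cdot> (\<pi>1 \<cdot> q2)" using QB(5) by simp
  also have "\<dots> = d0 \<cdot> (\<pi>2 \<cdot> q2)" by (rule comp_eq_extend2[OF pairsD(5)])
    (use mu_i_hom pairsD QB graph in simp_all)
  finally show "d1 \<cdot> (mu \<cdot> q1) = d0 \<cdot> (\<pi>2 \<cdot> q2)" .
  have "d1 \<cdot> (\<pi>1 \<cdot> q1) = d0 \<cdot> (\<pi>2 \<cdot> q1)"
    by (rule comp_eq_extend2[OF pairsD(5)]) (use mu_i_hom pairsD QB graph in simp_all)
  also have "\<dots> = d0 \<cdot> (\<pi>1 \<cdot> q2)" using QB(5) by simp
  also have "\<dots> = d0 \<cdot> (mu \<cdot> q2)"
    by (rule comp_eq_extend2[OF mu_hom(2)[symmetric]]) (use mu_i_hom pairsD QB graph in simp_all)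
  finally show "d1 \<cdot> (\<pi>1 \<cdot> q1) = d0 \<cdot> (mu \<cdot> q2)" .
qed

lemma gcomp_assoc_generic:
  assumes pq: "is_pullback C \<pi>2 \<pi>1 Q q1 q2"
  shows "gcomp (mu \<cdot> q1) (\<pi>2 \<cdot> q2) = gcomp (\<pi>1 \<cdot> q1) (mu \<cdot> q2)"
proof -
  note Q = pair_pullbackD[OF pq]
  note U = pair[OF Q(1,2) _ Q(9)] and V = pair[OF Q(3,4) _ Q(10)]
  show ?thesis unfolding gcomp_def
  proof (rule assoc_ax[rule_format], intro conjI)
    show "hom C (pb_pair C \<pi>1 \<pi>2 (mu \<cdot> q1) (\<pi>2 \<cdot> q2)) Q P"
      "hom C (pb_pair C \<pi>1 \<pi>2 (\<pi>1 \<cdot> q1) (mu \<cdot> q2)) Q P"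
      using U V Q unfolding hom_def by simp_all
  qed (use pq U V Q in simp_all)
qed

lemma gcomp_assoc:
  assumes a: "cd a = X1" "cd b = X1" "cd c = X1" "dm b = dm a" "dm c = dm a"
    "d1 \<cdot> a = d0 \<cdot> b" "d1 \<cdot> b = d0 \<cdot> c"
  shows "gcomp (gcomp a b) c = gcomp a (gcomp b c)"
proof -
  obtain Q q1 q2 where pq: "is_pullback C \<pi>2 \<pi>1 Q q1 q2" using pullback_exists[OF fc] pairsD graph by metis
  note QB = pullbackD[OF pq] and Q = pair_pullbackD[OF pq]
  note A = pair[OF a(1,2) a(4)[symmetric] a(6)] and B = pair[OF a(2,3) _ a(7)]
  define w where "w = pb_pair C q1 q2 (pb_pair C \<pi>1 \<pi>2 a b) (pb_pair C \<pi>1 \<pi>2 b c)"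
  have W: "dm w = dm a" "cd w = Q" "q1 \<cdot> w = pb_pair C \<pi>1 \<pi>2 a b" "q2 \<cdot> w = pb_pair C \<pi>1 \<pi>2 b c"
    using pb_pair[OF pq, of "pb_pair C \<pi>1 \<pi>2 a b" "pb_pair C \<pi>1 \<pi>2 b c", folded w_def] A B a pairsD graph
    by auto
  have e: "(mu \<cdot> q1) \<cdot> w = gcomp a b" "(\<pi>2 \<cdot> q2) \<cdot> w = c" "(\<pi>1 \<cdot> q1) \<cdot> w = a" "(mu \<cdot> q2) \<cdot> w = gcomp b c"
    using W A B a QB mu_i_hom pairsD unfolding gcomp_def by simp_all
  have "gcomp (gcomp a b) c = gcomp (mu \<cdot> q1) (\<pi>2 \<cdot> q2) \<cdot> w"
    using gcomp_comp[OF Q(1,2) _ Q(9), of w] e Q(5,6) W(2) by simp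
  also have "\<dots> = gcomp (\<pi>1 \<cdot> q1) (mu \<cdot> q2) \<cdot> w" by (simp only: gcomp_assoc_generic[OF pq])
  also have "\<dots> = gcomp a (gcomp b c)"
    using gcomp_comp[OF Q(3,4) _ Q(10), of w] e Q(7,8) W(2) by simp
  finally show ?thesis .
qed

lemma gcomp_cancel:
  assumes "cd x = X1" "cd y = X1" "dm x = dm y" "d0 \<cdot> x = d0 \<cdot> y"
  shows "gcomp x (gcomp (i \<cdot> x) y) = y"
proof -
  have ix: "cd (i \<cdot> x) = X1" "dm (i \<cdot> x) = dm x" "d1 \<cdot> (i \<cdot> x) = d0 \<cdot> y" "d0 \<cdot> (i \<cdot> x) = d1 \<cdot> x"
    using assms mu_i_hom comp_eq_extend[OF i_hom(3)] comp_eq_extend[OF i_hom(2)] graph by simp_all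
  have "gcomp x (gcomp (i \<cdot> x) y) = gcomp (gcomp x (i \<cdot> x)) y"
    by (rule gcomp_assoc[symmetric]) (use assms ix in simp_all)
  also have "\<dots> = gcomp (s0 \<cdot> (d0 \<cdot> y)) y" using gcomp_inv_right[OF assms(1)] assms by simp
  also have "\<dots> = y" by (rule gcomp_s0_left[OF assms(2)])
  finally show ?thesis .
qed

lemma gcomp_inv_cancel:
  assumes "cd x = X1" "cd y = X1" "dm x = dm y" "d1 \<cdot> x = d0 \<cdot> y"
  shows "gcomp (i \<cdot> x) (gcomp x y) = y"
proof -
  have ix: "cd (i \<cdot> x) = X1" "dm (i \<cdot> x) = dm x" "d1 \<cdot> (i \<cdot> x) = d0 \<cdot> x" "d0 \<cdot> (i \<cdot> x) = d1 \<cdot> x"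
    using assms mu_i_hom comp_eq_extend[OF i_hom(3)] comp_eq_extend[OF i_hom(2)] graph by simp_all
  have "gcomp (i \<cdot> x) (gcomp x y) = gcomp (gcomp (i \<cdot> x) x) y"
    by (rule gcomp_assoc[symmetric]) (use assms ix in simp_all)
  also have "\<dots> = gcomp (s0 \<cdot> (d0 \<cdot> y)) y" using gcomp_inv_left[OF assms(1)] assms by simp
  also have "\<dots> = y" by (rule gcomp_s0_left[OF assms(2)])
  finally show ?thesis .
qed

text \<open>The Mal'tsev operation a \<circ> b\<inverse> \<circ> c, the connector of R[d0] and R[d1].\<close>
definition herd where "herd a b c = gcomp (gcomp c (i \<cdot> b)) a"

lemma i_comp:
  assumes "cd a = X1"
  shows "cd (i \<cdot> a) = X1" "dm (i \<cdot> a) = dm a" "d0 \<cdot> (i \<cdot> a) = d1 \<cdot> a" "d1 \<cdot> (i \<cdot> a) = d0 \<cdot> a"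
  using assms mu_i_hom comp_eq_extend[OF i_hom(2)] comp_eq_extend[OF i_hom(3)] graph by simp_all

lemma herd:
  assumes "cd a = X1" "cd b = X1" "cd c = X1" "dm b = dm a" "dm c = dm a"
    "d0 \<cdot> a = d0 \<cdot> b" "d1 \<cdot> b = d1 \<cdot> c"
  shows "dm (herd a b c) = dm a" "cd (herd a b c) = X1" "d0 \<cdot> herd a b c = d0 \<cdot> c"
    "d1 \<cdot> herd a b c = d1 \<cdot> a"
  using gcomp[of c "i \<cdot> b"] gcomp[of "gcomp c (i \<cdot> b)" a] i_comp[of b] assms unfolding herd_def by simp_all

lemma herd_comp:
  assumes "cd a = X1" "cd b = X1" "cd c = X1" "dm b = dm a" "dm c = dm a"
    "d0 \<cdot> a = d0 \<cdot> b" "d1 \<cdot> b = d1 \<cdot> c" "cd h = dm a"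
  shows "herd a b c \<cdot> h = herd (a \<cdot> h) (b \<cdot> h) (c \<cdot> h)"
proof -
  note ib = i_comp[OF assms(2)]
  have "herd a b c \<cdot> h = gcomp (gcomp c (i \<cdot> b) \<cdot> h) (a \<cdot> h)" unfolding herd_def
    by (rule gcomp_comp) (use gcomp[of c "i \<cdot> b"] ib assms in simp_all)
  also have "gcomp c (i \<cdot> b) \<cdot> h = gcomp (c \<cdot> h) ((i \<cdot> b) \<cdot> h)"
    by (rule gcomp_comp) (use ib assms in simp_all)
  finally show ?thesis unfolding herd_def using ib assms mu_i_hom by simp
qed

lemma herd_cancel_right:
  assumes "cd a = X1" "cd b = X1" "dm b = dm a" "d0 \<cdot> a = d0 \<cdot> b"
  shows "herd a b b = a"
  unfolding herd_def using gcomp_inv_right[OF assms(2)] gcomp_s0_left[OF assms(1)] assms by simp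

lemma herd_cancel_left:
  assumes "cd b = X1" "cd c = X1" "dm c = dm b" "d1 \<cdot> b = d1 \<cdot> c"
  shows "herd b b c = c"
proof -
  have "herd b b c = gcomp c (gcomp (i \<cdot> b) b)" unfolding herd_def
    by (rule gcomp_assoc) (use i_comp[of b] assms in simp_all)
  also have "\<dots> = c" using gcomp_inv_left[OF assms(1)] gcomp_s0_right[OF assms(2)] assms by simp
  finally show ?thesis .
qed

text \<open>The comparison map c sends a pair (f, g) in R[d0] to f\<inverse> g.\<close>
lemma kernel_pullback:
  assumes k: "kernel_rel C d0 K k0 k1 \<delta>"
  obtains c where "is_pullback C d1 d0 K k0 c" "c \<cdot> \<delta> = s0 \<cdot> d1"
proof -
  note KB = kernel_relD[OF k]
  note ik = i_comp[of k0]
  define c where "c = gcomp (i \<cdot> k0) k1"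
  have CC: "dm c = K" "cd c = X1" "d0 \<cdot> c = d1 \<cdot> k0" "d1 \<cdot> c = d1 \<cdot> k1"
    using gcomp[of "i \<cdot> k0" k1, folded c_def] ik KB graph by simp_all
  have cnat: "c \<cdot> h = gcomp (i \<cdot> (k0 \<cdot> h)) (k1 \<cdot> h)" if "cd h = K" for h
    unfolding c_def using gcomp_comp[of "i \<cdot> k0" k1 h] ik KB graph mu_i_hom that by simp
  have "is_pullback C d1 d0 K k0 c"
  proof (rule pullbackI)
    fix a b assume ab: "cd a = dm d1" "cd b = dm d0" "dm a = dm b" "d1 \<cdot> a = d0 \<cdot> b"
    note T = gcomp[of a b]
    define u where "u = pb_pair C k0 k1 a (gcomp a b)"
    note U = pb_pair[OF KB(1), of a "gcomp a b", folded u_def]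
    have U: "dm u = dm a" "cd u = K" "k0 \<cdot> u = a" "k1 \<cdot> u = gcomp a b" using U ab graph T KB by simp_all
    have "c \<cdot> u = gcomp (i \<cdot> a) (gcomp a b)" using cnat[OF U(2)] U by (simp add: comp_eq_extend[OF U(3)])
    also have "\<dots> = b" by (rule gcomp_inv_cancel) (use ab graph in simp_all)
    finally show "\<exists>u. dm u = dm a \<and> cd u = K \<and> k0 \<cdot> u = a \<and> c \<cdot> u = b" using U by blast
  next
    have k1u: "k1 \<cdot> u = gcomp (k0 \<cdot> u) (c \<cdot> u)" if "cd u = K" for u
      using cnat[OF that] gcomp_cancel[of "k0 \<cdot> u" "k1 \<cdot> u"] that KB graph comp_eq_extend2[OF KB(6)] by simp
    fix u v assume uv: "cd u = K" "cd v = K" "dm u = dm v" "k0 \<cdot> u = k0 \<cdot> v" "c \<cdot> u = c \<cdot> v"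
    have "k1 \<cdot> u = k1 \<cdot> v" using k1u[OF uv(1)] k1u[OF uv(2)] uv(4,5) by simp
    then show "u = v" using pullback_ext[OF KB(1)] uv by simp
  qed (use graph KB CC in simp_all)
  moreover have "c \<cdot> \<delta> = s0 \<cdot> d1" using cnat[OF KB(8)] KB gcomp_inv_left[of "idm X1"] graph mu_i_hom by simp
  ultimately show ?thesis by (rule that)
qed

lemma kernel_sigma_rel:
  assumes fib: "fibrational C Sig" and sig: "(d0, s0) \<in> Sig"
  shows "kernel_is_sigma_rel C Sig d0"
  unfolding kernel_is_sigma_rel_def
proof (intro allI impI)
  fix K k0 k1 \<delta> assume k: "kernel_rel C d0 K k0 k1 \<delta>"
  obtain c where "is_pullback C d1 d0 K k0 c" "c \<cdot> \<delta> = s0 \<cdot> d1" by (rule kernel_pullback[OF k])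
  then show "sigma_rel C Sig (dm d0) K k0 k1 \<delta>" by (rule kernel_sigma_rel_of_pullback[OF fib sig rg k])
qed

lemma kernels_commute: "kernels_commute C d0 d1"
  unfolding kernels_commute_def commutator_zero_def
proof (intro allI impI)
  fix K k0 k1 \<delta> L l0 l1 \<epsilon> PP pR pS \<sigma>R \<sigma>S
  assume kl: "kernel_rel C d0 K k0 k1 \<delta> \<and> kernel_rel C d1 L l0 l1 \<epsilon>"
  assume h: "is_pullback C k1 l0 PP pR pS \<and>
        hom C \<sigma>R K PP \<and> pR \<cdot> \<sigma>R = idm K \<and> pS \<cdot> \<sigma>R = \<epsilon> \<cdot> k1 \<and>
        hom C \<sigma>S L PP \<and> pR \<cdot> \<sigma>S = \<delta> \<cdot> l0 \<and> pS \<cdot> \<sigma>S = idm L"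
  note KB = kernel_relD[of d0 K k0 k1 \<delta>] and LB = kernel_relD[of d1 L l0 l1 \<epsilon>]
  have KB: "is_pullback C d0 d0 K k0 k1" "dm k0 = K" "dm k1 = K" "cd k0 = X1" "cd k1 = X1"
    "d0 \<cdot> k0 = d0 \<cdot> k1" "dm \<delta> = X1" "cd \<delta> = K" "k0 \<cdot> \<delta> = idm X1" "k1 \<cdot> \<delta> = idm X1"
    using KB kl graph by auto
  have LB: "is_pullback C d1 d1 L l0 l1" "dm l0 = L" "dm l1 = L" "cd l0 = X1" "cd l1 = X1"
    "d1 \<cdot> l0 = d1 \<cdot> l1" "dm \<epsilon> = X1" "cd \<epsilon> = L" "l0 \<cdot> \<epsilon> = idm X1" "l1 \<cdot> \<epsilon> = idm X1"
    using LB kl graph by auto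
  have PB2: "dm pR = PP" "dm pS = PP" "cd pR = K" "cd pS = L" "k1 \<cdot> pR = l0 \<cdot> pS"
    using pullbackD[of k1 l0 PP pR pS] h KB LB by auto
  have SR: "dm \<sigma>R = K" "cd \<sigma>R = PP" and SS: "dm \<sigma>S = L" "cd \<sigma>S = PP"
    using h unfolding hom_def by auto
  have abc: "d0 \<cdot> (k0 \<cdot> pR) = d0 \<cdot> (k1 \<cdot> pR)" "d1 \<cdot> (k1 \<cdot> pR) = d1 \<cdot> (l1 \<cdot> pS)"
    using comp_eq_extend2[OF KB(6), of pR] comp_eq_extend2[OF LB(6), of pS] PB2 KB LB graph by simp_all
  define p where "p = herd (k0 \<cdot> pR) (k1 \<cdot> pR) (l1 \<cdot> pS)"
  have pnat: "p \<cdot> x = herd (k0 \<cdot> (pR \<cdot> x)) (k1 \<cdot> (pR \<cdot> x)) (l1 \<cdot> (pS \<cdot> x))" if "cd x = PP" for x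
    unfolding p_def using herd_comp[of "k0 \<cdot> pR" "k1 \<cdot> pR" "l1 \<cdot> pS" x] abc PB2(1-4) KB LB that by simp
  have "p \<cdot> \<sigma>R = herd k0 k1 k1"
    using pnat[OF SR(2)] h SR KB LB comp_eq_extend[OF LB(10)] by simp
  also have "\<dots> = k0" by (rule herd_cancel_right) (use KB in simp_all)
  finally have pR: "p \<cdot> \<sigma>R = k0" .
  have "p \<cdot> \<sigma>S = herd l0 l0 l1"
    using pnat[OF SS(2)] h SS KB LB comp_eq_extend[OF KB(9)] comp_eq_extend[OF KB(10)] by simp
  also have "\<dots> = l1" by (rule herd_cancel_left) (use LB in simp_all)
  finally have pS: "p \<cdot> \<sigma>S = l1" .
  show "\<exists>p. hom C p PP (dm d0) \<and> p \<cdot> \<sigma>R = k0 \<and> p \<cdot> \<sigma>S = l1"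
    using herd[of "k0 \<cdot> pR" "k1 \<cdot> pR" "l1 \<cdot> pS", folded p_def] abc PB2(1-4) KB LB pR pS graph
    unfolding hom_def by auto
qed

end

section \<open>Connectors\<close>

text \<open>PP is the object of triples a R[d0] b R[d1] c, with pR = (a, b) and pS = (b, c), and p is a
  connector; conn applies it to generalised triples.\<close>
locale connector_context = cat_context C for C :: "('o,'m) cat" +
  fixes Sig X0 X1 d0 d1 s0 K k0 k1 \<delta> L l0 l1 \<epsilon> PP pR pS p
  assumes fc: "finitely_complete C" and fib: "fibrational C Sig" and mal: "sigma_maltsev C Sig"
    and rg: "refl_graph C X0 X1 d0 d1 s0"
    and k: "kernel_rel C d0 K k0 k1 \<delta>" and l: "kernel_rel C d1 L l0 l1 \<epsilon>"
    and ks: "kernel_is_sigma_rel C Sig d0"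
    and pbP: "is_pullback C k1 l0 PP pR pS"
    and p: "dm p = PP" "cd p = X1"
      "Cmp C p (pb_pair C pR pS (idm K) (Cmp C \<epsilon> k1)) = k0"
      "Cmp C p (pb_pair C pR pS (Cmp C \<delta> l0) (idm L)) = l1"
begin

lemma graph: "dm d0 = X1" "cd d0 = X0" "dm d1 = X1" "cd d1 = X0" "dm s0 = X0" "cd s0 = X1"
    "d0 \<cdot> s0 = idm X0" "d1 \<cdot> s0 = idm X0"
  using rg unfolding refl_graph_def hom_def by auto

lemma ker0: "is_pullback C d0 d0 K k0 k1" "dm k0 = K" "dm k1 = K" "cd k0 = X1" "cd k1 = X1"
    "d0 \<cdot> k0 = d0 \<cdot> k1" "dm \<delta> = X1" "cd \<delta> = K" "k0 \<cdot> \<delta> = idm X1" "k1 \<cdot> \<delta> = idm X1"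
  using kernel_relD[OF k] graph by auto

lemma ker1: "is_pullback C d1 d1 L l0 l1" "dm l0 = L" "dm l1 = L" "cd l0 = X1" "cd l1 = X1"
    "d1 \<cdot> l0 = d1 \<cdot> l1" "dm \<epsilon> = X1" "cd \<epsilon> = L" "l0 \<cdot> \<epsilon> = idm X1" "l1 \<cdot> \<epsilon> = idm X1"
  using kernel_relD[OF l] graph by auto

lemmas triplesD = pullbackD[OF pbP]

definition "\<sigma>R = pb_pair C pR pS (idm K) (\<epsilon> \<cdot> k1)"
definition "\<sigma>S = pb_pair C pR pS (\<delta> \<cdot> l0) (idm L)"

lemma sigmaR: "dm \<sigma>R = K" "cd \<sigma>R = PP" "pR \<cdot> \<sigma>R = idm K" "pS \<cdot> \<sigma>R = \<epsilon> \<cdot> k1" "p \<cdot> \<sigma>R = k0"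
proof -
  have e: "l0 \<cdot> (\<epsilon> \<cdot> k1) = k1" using comp_eq_extend[OF ker1(9)] ker0 ker1 by simp
  show "dm \<sigma>R = K" "cd \<sigma>R = PP" "pR \<cdot> \<sigma>R = idm K" "pS \<cdot> \<sigma>R = \<epsilon> \<cdot> k1"
    unfolding \<sigma>R_def using pb_pair[OF pbP, of "idm K" "\<epsilon> \<cdot> k1"] e ker0 ker1 by simp_all
  show "p \<cdot> \<sigma>R = k0" unfolding \<sigma>R_def by (rule p(3))
qed

lemma sigmaS: "dm \<sigma>S = L" "cd \<sigma>S = PP" "pR \<cdot> \<sigma>S = \<delta> \<cdot> l0" "pS \<cdot> \<sigma>S = idm L" "p \<cdot> \<sigma>S = l1"
proof -
  have e: "k1 \<cdot> (\<delta> \<cdot> l0) = l0" using comp_eq_extend[OF ker0(10)] ker0 ker1 by simp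
  show "dm \<sigma>S = L" "cd \<sigma>S = PP" "pR \<cdot> \<sigma>S = \<delta> \<cdot> l0" "pS \<cdot> \<sigma>S = idm L"
    unfolding \<sigma>S_def using pb_pair[OF pbP, of "\<delta> \<cdot> l0" "idm L"] e ker0 ker1 by simp_all
  show "p \<cdot> \<sigma>S = l1" unfolding \<sigma>S_def by (rule p(4))
qed

lemma sections_jointly_extremally_epic: "jointly_extremally_epic C \<sigma>S \<sigma>R PP"
proof -
  obtain s' tb where S': "dm s' = L" "cd s' = PP" "pS \<cdot> s' = idm L" "pR \<cdot> s' = \<delta> \<cdot> l0"
    and T': "dm tb = K" "cd tb = PP" "pS \<cdot> tb = \<epsilon> \<cdot> k1" "pR \<cdot> tb = idm K"
    and J: "jointly_extremally_epic C s' tb PP"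
    by (rule sigma_maltsev_sectionsE[OF mal fib kernel_is_sigma_relD(2)[OF ks k] _ _ _ _ pullback_sym[OF pbP]])
      (use ker0 ker1 graph in simp_all)
  have "s' = \<sigma>S" unfolding \<sigma>S_def
    by (rule pb_pair_unique[OF pbP]) (use S' ker0 ker1 comp_eq_extend[OF ker0(10)] in simp_all)
  moreover have "tb = \<sigma>R" unfolding \<sigma>R_def
    by (rule pb_pair_unique[OF pbP]) (use T' ker0 ker1 comp_eq_extend[OF ker1(9)] in simp_all)
  ultimately show ?thesis using J by simp
qed

text \<open>Not part of the definition of [R[d0], R[d1]] = 0: p(a, b, c) has the domain of c and the
  codomain of a, since both sides agree on the jointly extremally epic sections.\<close>
lemma connector_d0: "d0 \<cdot> p = d0 \<cdot> (l1 \<cdot> pS)"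
  by (rule jointly_extremally_epic_cancel[OF fc sections_jointly_extremally_epic])
    (use p graph triplesD ker0 ker1 sigmaR sigmaS comp_eq_extend[OF sigmaR(4)] comp_eq_extend[OF sigmaS(4)]
      comp_eq_extend[OF ker1(10)] comp_eq_extend[OF sigmaS(5)] comp_eq_extend[OF sigmaR(5)] in simp_all)

lemma connector_d1: "d1 \<cdot> p = d1 \<cdot> (k0 \<cdot> pR)"
  by (rule jointly_extremally_epic_cancel[OF fc sections_jointly_extremally_epic])
    (use p graph triplesD ker0 ker1 sigmaR sigmaS comp_eq_extend[OF sigmaR(3)] comp_eq_extend[OF sigmaS(3)]
      comp_eq_extend[OF ker0(9)] comp_eq_extend[OF sigmaS(5)] comp_eq_extend[OF sigmaR(5)] in simp_all)

definition "kpair a b = pb_pair C k0 k1 a b"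
definition "lpair a b = pb_pair C l0 l1 a b"
definition "triple a b c = pb_pair C pR pS (kpair a b) (lpair b c)"
definition "conn a b c = p \<cdot> triple a b c"

lemma kpair:
  assumes "cd a = X1" "cd b = X1" "dm b = dm a" "d0 \<cdot> a = d0 \<cdot> b"
  shows "dm (kpair a b) = dm a" "cd (kpair a b) = K" "k0 \<cdot> kpair a b = a" "k1 \<cdot> kpair a b = b"
  unfolding kpair_def using pb_pair[OF ker0(1), of a b] assms graph by simp_all

lemma lpair:
  assumes "cd b = X1" "cd c = X1" "dm c = dm b" "d1 \<cdot> b = d1 \<cdot> c"
  shows "dm (lpair b c) = dm b" "cd (lpair b c) = L" "l0 \<cdot> lpair b c = b" "l1 \<cdot> lpair b c = c"
  unfolding lpair_def using pb_pair[OF ker1(1), of b c] assms graph by simp_all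

lemma triple:
  assumes "cd a = X1" "cd b = X1" "cd c = X1" "dm b = dm a" "dm c = dm a"
    "d0 \<cdot> a = d0 \<cdot> b" "d1 \<cdot> b = d1 \<cdot> c"
  shows "dm (triple a b c) = dm a" "cd (triple a b c) = PP" "pR \<cdot> triple a b c = kpair a b"
    "pS \<cdot> triple a b c = lpair b c"
proof -
  note K = kpair[OF assms(1,2,4,6)] and Lq = lpair[OF assms(2,3) _ assms(7)]
  have Lq: "dm (lpair b c) = dm a" "cd (lpair b c) = L" "l0 \<cdot> lpair b c = b" "l1 \<cdot> lpair b c = c"
    using Lq assms by simp_all
  show "dm (triple a b c) = dm a" "cd (triple a b c) = PP" "pR \<cdot> triple a b c = kpair a b"
    "pS \<cdot> triple a b c = lpair b c"
    unfolding triple_def using pb_pair[OF pbP, of "kpair a b" "lpair b c"] K Lq ker0 ker1 by simp_all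
qed

lemma conn:
  assumes "cd a = X1" "cd b = X1" "cd c = X1" "dm b = dm a" "dm c = dm a"
    "d0 \<cdot> a = d0 \<cdot> b" "d1 \<cdot> b = d1 \<cdot> c"
  shows "dm (conn a b c) = dm a" "cd (conn a b c) = X1" "d0 \<cdot> conn a b c = d0 \<cdot> c"
    "d1 \<cdot> conn a b c = d1 \<cdot> a"
proof -
  note T = triple[OF assms]
  note K = kpair[OF assms(1,2,4,6)] and Lq = lpair[OF assms(2,3) _ assms(7)]
  show "dm (conn a b c) = dm a" "cd (conn a b c) = X1" unfolding conn_def using T p by simp_all
  show "d0 \<cdot> conn a b c = d0 \<cdot> c" unfolding conn_def
    using comp_eq_extend[OF connector_d0] comp_eq_extend[OF T(4)] T p triplesD ker1 graph Lq assms by simp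
  show "d1 \<cdot> conn a b c = d1 \<cdot> a" unfolding conn_def
    using comp_eq_extend[OF connector_d1] comp_eq_extend[OF T(3)] T p triplesD ker0 graph K assms by simp
qed

lemma triple_comp:
  assumes "cd a = X1" "cd b = X1" "cd c = X1" "dm b = dm a" "dm c = dm a"
    "d0 \<cdot> a = d0 \<cdot> b" "d1 \<cdot> b = d1 \<cdot> c" "cd h = dm a"
  shows "triple a b c \<cdot> h = triple (a \<cdot> h) (b \<cdot> h) (c \<cdot> h)"
proof -
  note K = kpair[OF assms(1,2,4,6)] and Lq = lpair[OF assms(2,3) _ assms(7)]
  have kn: "kpair a b \<cdot> h = kpair (a \<cdot> h) (b \<cdot> h)" unfolding kpair_def
    by (rule pb_pair_comp[OF ker0(1)]) (use assms graph in simp_all)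
  have ln: "lpair b c \<cdot> h = lpair (b \<cdot> h) (c \<cdot> h)" unfolding lpair_def
    by (rule pb_pair_comp[OF ker1(1)]) (use assms graph in simp_all)
  have "triple a b c \<cdot> h = pb_pair C pR pS (kpair a b \<cdot> h) (lpair b c \<cdot> h)" unfolding triple_def
    by (rule pb_pair_comp[OF pbP]) (use assms K Lq ker0 ker1 in simp_all)
  then show ?thesis unfolding triple_def kn ln .
qed

lemma conn_comp:
  assumes "cd a = X1" "cd b = X1" "cd c = X1" "dm b = dm a" "dm c = dm a"
    "d0 \<cdot> a = d0 \<cdot> b" "d1 \<cdot> b = d1 \<cdot> c" "cd h = dm a"
  shows "conn a b c \<cdot> h = conn (a \<cdot> h) (b \<cdot> h) (c \<cdot> h)"
  unfolding conn_def using triple_comp[OF assms] triple[OF assms(1-7)] p assms by simp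

lemma conn_cancel_right:
  assumes "cd a = X1" "cd b = X1" "dm b = dm a" "d0 \<cdot> a = d0 \<cdot> b"
  shows "conn a b b = a"
proof -
  note K = kpair[OF assms]
  have lb: "lpair b b = \<epsilon> \<cdot> b" unfolding lpair_def
    by (rule pb_pair_unique[OF ker1(1), symmetric])
      (use assms ker1 graph comp_eq_extend[OF ker1(9)] comp_eq_extend[OF ker1(10)] in simp_all)
  have "triple a b b = \<sigma>R \<cdot> kpair a b" unfolding triple_def
    by (rule pb_pair_unique[OF pbP, symmetric])
      (use assms K sigmaR ker0 ker1 triplesD comp_eq_extend[OF sigmaR(3)] comp_eq_extend[OF sigmaR(4)] lb
        comp_eq_extend[OF ker1(9)] in simp_all)
  then show ?thesis unfolding conn_def using comp_eq_extend[OF sigmaR(5)] K sigmaR p by simp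
qed

lemma conn_cancel_left:
  assumes "cd b = X1" "cd c = X1" "dm c = dm b" "d1 \<cdot> b = d1 \<cdot> c"
  shows "conn b b c = c"
proof -
  note Lq = lpair[OF assms]
  have kb: "kpair b b = \<delta> \<cdot> b" unfolding kpair_def
    by (rule pb_pair_unique[OF ker0(1), symmetric])
      (use assms ker0 graph comp_eq_extend[OF ker0(9)] comp_eq_extend[OF ker0(10)] in simp_all)
  have "triple b b c = \<sigma>S \<cdot> lpair b c" unfolding triple_def
    by (rule pb_pair_unique[OF pbP, symmetric])
      (use assms Lq sigmaS ker0 ker1 triplesD comp_eq_extend[OF sigmaS(3)] comp_eq_extend[OF sigmaS(4)] kb
        comp_eq_extend[OF ker0(10)] in simp_all)
  then show ?thesis unfolding conn_def using comp_eq_extend[OF sigmaS(5)] Lq sigmaS p by simp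
qed

end

text \<open>Y is the object of quadruples b R[d1] c R[d0] e R[d1] f, with y1 = (b, c) and y2 = (c, e, f);
  Z is the object of quintuples a R[d0] b R[d1] c R[d0] e R[d1] f, with z2 = (a, b). The generic
  quintuple qa, ..., qf lives on Z.\<close>
locale connector_quintuples = connector_context +
  fixes Y y1 y2 Z z1 z2
  assumes quadruples: "is_pullback C l1 (Cmp C k0 pR) Y y1 y2"
    and quintuples: "is_pullback C (Cmp C l0 y1) k1 Z z1 z2"
begin

lemma quadruplesD: "dm y1 = Y" "dm y2 = Y" "cd y1 = L" "cd y2 = PP" "l1 \<cdot> y1 = k0 \<cdot> (pR \<cdot> y2)"
  using pullbackD[OF quadruples] ker0 ker1 triplesD by simp_all

lemma quintuplesD: "dm z1 = Z" "dm z2 = Z" "cd z1 = Y" "cd z2 = K" "l0 \<cdot> (y1 \<cdot> z1) = k1 \<cdot> z2"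
  using pullbackD[OF quintuples] quadruplesD ker0 ker1 by simp_all

definition "diag = pb_pair C y1 y2 \<epsilon> (\<sigma>R \<cdot> \<delta>)"

lemma diag: "dm diag = X1" "cd diag = Y" "y1 \<cdot> diag = \<epsilon>" "y2 \<cdot> diag = \<sigma>R \<cdot> \<delta>" "(l0 \<cdot> y1) \<cdot> diag = idm X1"
proof -
  have "k0 \<cdot> (pR \<cdot> (\<sigma>R \<cdot> \<delta>)) = idm X1" using comp_eq_extend[OF sigmaR(3)] sigmaR ker0 ker1 triplesD by simp
  then show D: "dm diag = X1" "cd diag = Y" "y1 \<cdot> diag = \<epsilon>" "y2 \<cdot> diag = \<sigma>R \<cdot> \<delta>"
    unfolding diag_def using pb_pair[OF quadruples, of \<epsilon> "\<sigma>R \<cdot> \<delta>"] ker0 ker1 sigmaR triplesD by simp_all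
  then show "(l0 \<cdot> y1) \<cdot> diag = idm X1" using comp_eq_extend[OF D(3)] quadruplesD ker1 by simp
qed

definition "qa = k0 \<cdot> z2"
definition "qb = k1 \<cdot> z2"
definition "qc = l1 \<cdot> (y1 \<cdot> z1)"
definition "qe = k1 \<cdot> (pR \<cdot> (y2 \<cdot> z1))"
definition "qf = l1 \<cdot> (pS \<cdot> (y2 \<cdot> z1))"

lemma generic_hom:
  "cd qa = X1" "cd qb = X1" "cd qc = X1" "cd qe = X1" "cd qf = X1"
  "dm qa = Z" "dm qb = Z" "dm qc = Z" "dm qe = Z" "dm qf = Z"
  unfolding qa_def qb_def qc_def qe_def qf_def using ker0 ker1 triplesD quadruplesD quintuplesD by simp_all

lemma generic_alt: "qb = l0 \<cdot> (y1 \<cdot> z1)" "qc = k0 \<cdot> (pR \<cdot> (y2 \<cdot> z1))" "qe = l0 \<cdot> (pS \<cdot> (y2 \<cdot> z1))"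
  unfolding qb_def qc_def qe_def
  using comp_eq_extend[OF quadruplesD(5)] comp_eq_extend[OF triplesD(5)] quintuplesD quadruplesD
    ker0 ker1 triplesD by simp_all

lemma generic_composable:
  "d0 \<cdot> qa = d0 \<cdot> qb" "d1 \<cdot> qb = d1 \<cdot> qc" "d0 \<cdot> qc = d0 \<cdot> qe" "d1 \<cdot> qe = d1 \<cdot> qf"
proof -
  note H = ker0 ker1 triplesD quadruplesD(1-4) quintuplesD(1-4) graph
  show "d0 \<cdot> qa = d0 \<cdot> qb" unfolding qa_def qb_def by (rule comp_eq_extend2[OF ker0(6)]) (use H in simp_all)
  show "d1 \<cdot> qb = d1 \<cdot> qc" unfolding generic_alt(1) qc_def
    by (rule comp_eq_extend2[OF ker1(6)]) (use H in simp_all)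
  show "d0 \<cdot> qc = d0 \<cdot> qe" unfolding generic_alt(2) qe_def
    by (rule comp_eq_extend2[OF ker0(6)]) (use H in simp_all)
  show "d1 \<cdot> qe = d1 \<cdot> qf" unfolding generic_alt(3) qf_def
    by (rule comp_eq_extend2[OF ker1(6)]) (use H in simp_all)
qed

definition "lhs = conn qa qb (conn qc qe qf)"
definition "rhs = conn (conn qa qb qc) qe qf"

lemma lhs_rhs_comp:
  assumes "cd h = Z"
  shows "lhs \<cdot> h = conn (qa \<cdot> h) (qb \<cdot> h) (conn (qc \<cdot> h) (qe \<cdot> h) (qf \<cdot> h))"
    and "rhs \<cdot> h = conn (conn (qa \<cdot> h) (qb \<cdot> h) (qc \<cdot> h)) (qe \<cdot> h) (qf \<cdot> h)"
proof -
  note G = generic_hom generic_composable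
  have inner: "conn qc qe qf \<cdot> h = conn (qc \<cdot> h) (qe \<cdot> h) (qf \<cdot> h)"
    "conn qa qb qc \<cdot> h = conn (qa \<cdot> h) (qb \<cdot> h) (qc \<cdot> h)"
    by (rule conn_comp; use G assms in simp)+
  show "lhs \<cdot> h = conn (qa \<cdot> h) (qb \<cdot> h) (conn (qc \<cdot> h) (qe \<cdot> h) (qf \<cdot> h))"
    unfolding lhs_def inner(1)[symmetric]
    by (rule conn_comp) (use G conn[of qc qe qf] assms in simp_all)
  show "rhs \<cdot> h = conn (conn (qa \<cdot> h) (qb \<cdot> h) (qc \<cdot> h)) (qe \<cdot> h) (qf \<cdot> h)"
    unfolding rhs_def inner(2)[symmetric]
    by (rule conn_comp) (use G conn[of qa qb qc] assms in simp_all)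
qed

lemma lhs_rhs_on_diagonal:
  assumes S': "dm s' = Y" "cd s' = Z" "z1 \<cdot> s' = idm Y" "z2 \<cdot> s' = \<delta> \<cdot> (l0 \<cdot> y1)"
  shows "lhs \<cdot> s' = rhs \<cdot> s'"
proof -
  note YB = quadruplesD and XB = quintuplesD
  have s: "qa \<cdot> s' = l0 \<cdot> y1" "qb \<cdot> s' = l0 \<cdot> y1" "qc \<cdot> s' = l1 \<cdot> y1" "qe \<cdot> s' = k1 \<cdot> (pR \<cdot> y2)"
    "qf \<cdot> s' = l1 \<cdot> (pS \<cdot> y2)"
    unfolding qa_def qb_def qc_def qe_def qf_def
    using comp_eq_extend[OF S'(4)] comp_eq_extend[OF ker0(9)] comp_eq_extend[OF ker0(10)]
      comp_eq_extend[OF S'(3)] S' XB YB ker0 ker1 triplesD by simp_all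
  have yc: "d0 \<cdot> (l1 \<cdot> y1) = d0 \<cdot> (k1 \<cdot> (pR \<cdot> y2))"
    using comp_eq_extend[OF YB(5)] comp_eq_extend2[OF ker0(6), of "pR \<cdot> y2"] YB triplesD ker0 ker1 graph
      by simp
  have ye: "d1 \<cdot> (k1 \<cdot> (pR \<cdot> y2)) = d1 \<cdot> (l1 \<cdot> (pS \<cdot> y2))"
    using comp_eq_extend2[OF triplesD(5), of y2] comp_eq_extend2[OF ker1(6), of
      "pS \<cdot> y2"] YB triplesD ker0 ker1 graph
    by simp
  have gc: "d1 \<cdot> (l0 \<cdot> y1) = d1 \<cdot> (l1 \<cdot> y1)" by (rule comp_eq_extend2[OF ker1(6)])
    (use ker1 YB graph in simp_all)
  note P3 = conn[of "l1 \<cdot> y1" "k1 \<cdot> (pR \<cdot> y2)" "l1 \<cdot> (pS \<cdot> y2)"]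
  have "lhs \<cdot> s' = conn (l1 \<cdot> y1) (k1 \<cdot> (pR \<cdot> y2)) (l1 \<cdot> (pS \<cdot> y2))"
    unfolding lhs_rhs_comp(1)[OF S'(2)] s
    by (rule conn_cancel_left) (use P3 yc ye gc YB(1-4) ker0 ker1 triplesD in simp_all)
  also have "\<dots> = rhs \<cdot> s'"
    unfolding lhs_rhs_comp(2)[OF S'(2)] s
    by (subst conn_cancel_left) (use gc YB(1-4) ker1 in simp_all)
  finally show ?thesis .
qed

lemma lhs_rhs_on_degenerate:
  assumes T': "dm tb = K" "cd tb = Z" "z1 \<cdot> tb = diag \<cdot> k1" "z2 \<cdot> tb = idm K"
  shows "lhs \<cdot> tb = rhs \<cdot> tb"
proof -
  note YB = quadruplesD and XB = quintuplesD and T = diag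
  have y1t: "y1 \<cdot> (diag \<cdot> k1) = \<epsilon> \<cdot> k1" using comp_eq_extend[OF T(3)] T YB ker0 by simp
  have y2t: "y2 \<cdot> (diag \<cdot> k1) = \<sigma>R \<cdot> (\<delta> \<cdot> k1)" using comp_eq_extend[OF T(4)] T YB ker0 sigmaR by simp
  have t: "qa \<cdot> tb = k0" "qb \<cdot> tb = k1" "qc \<cdot> tb = k1" "qe \<cdot> tb = k1" "qf \<cdot> tb = k1"
    unfolding qa_def qb_def qc_def qe_def qf_def
    using comp_eq_extend[OF T'(4)] comp_eq_extend[OF T'(3)] T' XB YB ker0 ker1 triplesD y1t y2t T sigmaR
      comp_eq_extend[OF ker1(10)] comp_eq_extend[OF sigmaR(3)] comp_eq_extend[OF sigmaR(4)]
      comp_eq_extend[OF ker0(10)] by simp_all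
  have kk: "conn k0 k1 k1 = k0" by (rule conn_cancel_right) (use ker0 in simp_all)
  have k3: "conn k1 k1 k1 = k1" by (rule conn_cancel_left) (use ker0 in simp_all)
  show ?thesis unfolding lhs_rhs_comp[OF T'(2)] t kk k3 ..
qed

lemma lhs_eq_rhs: "lhs = rhs"
proof -
  obtain s' tb where S': "dm s' = Y" "cd s' = Z" "z1 \<cdot> s' = idm Y" "z2 \<cdot> s' = \<delta> \<cdot> (l0 \<cdot> y1)"
    and T': "dm tb = K" "cd tb = Z" "z1 \<cdot> tb = diag \<cdot> k1" "z2 \<cdot> tb = idm K"
    and J: "jointly_extremally_epic C s' tb Z"
    by (rule sigma_maltsev_sectionsE[OF mal fib kernel_is_sigma_relD(2)[OF ks k] _ _ _ _ quintuples])
      (use diag quadruplesD(1-4) ker0 ker1 in \<open>simp_all del: comp_assoc\<close>)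
  show ?thesis
  proof (rule jointly_extremally_epic_cancel[OF fc J])
    show "dm lhs = Z" "dm rhs = Z" "cd lhs = cd rhs" unfolding lhs_def rhs_def
      using conn[of qa qb "conn qc qe qf"] conn[of
        "conn qa qb qc" qe qf] conn[of qc qe qf] conn[of qa qb qc]
        generic_hom generic_composable by simp_all
  qed (rule lhs_rhs_on_diagonal[OF S'] lhs_rhs_on_degenerate[OF T'])+
qed

lemma generic_pointE:
  assumes c: "cd a = X1" "cd b = X1" "cd c = X1" "cd e = X1" "cd f = X1"
    "dm b = dm a" "dm c = dm a" "dm e = dm a" "dm f = dm a"
    "d0 \<cdot> a = d0 \<cdot> b" "d1 \<cdot> b = d1 \<cdot> c" "d0 \<cdot> c = d0 \<cdot> e" "d1 \<cdot> e = d1 \<cdot> f"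
  obtains h where "cd h = Z" "qa \<cdot> h = a" "qb \<cdot> h = b" "qc \<cdot> h = c" "qe \<cdot> h = e" "qf \<cdot> h = f"
proof -
  note YB = quadruplesD and XB = quintuplesD
  note LP = lpair[of b c] and TR = triple[of c e f] and KP = kpair[of a b]
  have LP: "dm (lpair b c) = dm a" "cd (lpair b c) = L" "l0 \<cdot> lpair b c = b" "l1 \<cdot> lpair b c = c"
    using LP c by simp_all
  have TR: "dm (triple c e f) = dm a" "cd (triple c e f) = PP" "pR \<cdot> triple c e f = kpair c e"
    "pS \<cdot> triple c e f = lpair e f" using TR c by simp_all
  have KP: "dm (kpair a b) = dm a" "cd (kpair a b) = K" "k0 \<cdot> kpair a b = a" "k1 \<cdot> kpair a b = b"
    using KP c by simp_all
  have KP2: "k0 \<cdot> kpair c e = c" "k1 \<cdot> kpair c e = e" and LP2: "l1 \<cdot> lpair e f = f"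
    using kpair[of c e] lpair[of e f] c by simp_all
  define yy where "yy = pb_pair C y1 y2 (lpair b c) (triple c e f)"
  have YY: "dm yy = dm a" "cd yy = Y" "y1 \<cdot> yy = lpair b c" "y2 \<cdot> yy = triple c e f"
    using pb_pair[OF quadruples, of "lpair b c" "triple c e f", folded yy_def] LP TR ker1 ker0 triplesD KP2
    by simp_all
  have "(l0 \<cdot> y1) \<cdot> yy = k1 \<cdot> kpair a b" using comp_eq_extend[OF YY(3)] YY YB ker1 LP KP by simp
  define h where "h = pb_pair C z1 z2 yy (kpair a b)"
  note HH = pb_pair[OF quintuples, of yy "kpair a b", folded h_def]
  have HH: "dm h = dm a" "cd h = Z" "z1 \<cdot> h = yy" "z2 \<cdot> h = kpair a b"
    using HH \<open>(l0 \<cdot> y1) \<cdot> yy = k1 \<cdot> kpair a b\<close> YY YB KP ker0 ker1 by simp_all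
  show ?thesis
  proof (rule that[OF HH(2)])
    show "qa \<cdot> h = a" "qb \<cdot> h = b" unfolding qa_def qb_def
      using comp_eq_extend[OF HH(4)] HH XB ker0 KP by simp_all
    show "qc \<cdot> h = c" unfolding qc_def
      using comp_eq_extend[OF HH(3)] comp_eq_extend[OF YY(3)] HH XB YB YY ker1 LP by simp
    show "qe \<cdot> h = e" "qf \<cdot> h = f" unfolding qe_def qf_def
      using comp_eq_extend[OF HH(3)] comp_eq_extend[OF YY(4)] comp_eq_extend[OF TR(3)] comp_eq_extend[OF TR(4)]
        HH XB YB YY ker0 ker1 triplesD TR KP2 LP2 by simp_all
  qed
qed

end

context connector_context begin

lemma conn_assoc:
  assumes c: "cd a = X1" "cd b = X1" "cd c = X1" "cd e = X1" "cd f = X1"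
    "dm b = dm a" "dm c = dm a" "dm e = dm a" "dm f = dm a"
    "d0 \<cdot> a = d0 \<cdot> b" "d1 \<cdot> b = d1 \<cdot> c" "d0 \<cdot> c = d0 \<cdot> e" "d1 \<cdot> e = d1 \<cdot> f"
  shows "conn a b (conn c e f) = conn (conn a b c) e f"
proof -
  obtain Y y1 y2 where quad: "is_pullback C l1 (k0 \<cdot> pR) Y y1 y2"
    using pullback_exists[OF fc] ker0 ker1 triplesD by (metis cod_comp)
  obtain Z z1 z2 where quint: "is_pullback C (l0 \<cdot> y1) k1 Z z1 z2"
    using pullback_exists[OF fc] pullbackD[OF quad] ker0 ker1 by (metis cod_comp)
  interpret Q: connector_quintuples C Sig X0 X1 d0 d1 s0 K k0 k1 \<delta> L l0 l1 \<epsilon> PP pR pS p Y y1 y2 Z z1 z2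
    by unfold_locales (fact quad quint)+
  obtain h where h: "cd h = Z" "Q.qa \<cdot> h = a" "Q.qb \<cdot> h = b" "Q.qc \<cdot> h = c" "Q.qe \<cdot> h = e" "Q.qf \<cdot> h = f"
    by (rule Q.generic_pointE[OF c])
  show ?thesis using Q.lhs_rhs_comp[OF h(1)] Q.lhs_eq_rhs unfolding h(2-6) by simp
qed

lemma conn_absorb_left:
  assumes "cd a = X1" "cd b = X1" "cd c = X1" "cd e = X1"
    "dm b = dm a" "dm c = dm a" "dm e = dm a"
    "d0 \<cdot> a = d0 \<cdot> b" "d1 \<cdot> b = d1 \<cdot> c" "d1 \<cdot> c = d1 \<cdot> e"
  shows "conn (conn a b c) c e = conn a b e"
proof -
  have "conn (conn a b c) c e = conn a b (conn c c e)" by (rule conn_assoc[symmetric])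
    (use assms in simp_all)
  also have "conn c c e = e" by (rule conn_cancel_left) (use assms in simp_all)
  finally show ?thesis .
qed

lemma conn_absorb_right:
  assumes "cd a = X1" "cd b = X1" "cd c = X1" "cd e = X1"
    "dm b = dm a" "dm c = dm a" "dm e = dm a"
    "d0 \<cdot> a = d0 \<cdot> b" "d0 \<cdot> b = d0 \<cdot> c" "d1 \<cdot> c = d1 \<cdot> e"
  shows "conn a b (conn b c e) = conn a c e"
proof -
  have "conn a b (conn b c e) = conn (conn a b b) c e" by (rule conn_assoc) (use assms in simp_all)
  also have "conn a b b = a" by (rule conn_cancel_right) (use assms in simp_all)
  finally show ?thesis .
qed

definition "ccomp f g = conn g (s0 \<cdot> (d1 \<cdot> f)) f"
definition "cinv = conn (s0 \<cdot> d0) (idm X1) (s0 \<cdot> d1)"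

lemma s0_comp:
  assumes "cd h = X0"
  shows "cd (s0 \<cdot> h) = X1" "dm (s0 \<cdot> h) = dm h" "d0 \<cdot> (s0 \<cdot> h) = h" "d1 \<cdot> (s0 \<cdot> h) = h"
  using comp_eq_extend[OF graph(7)] comp_eq_extend[OF graph(8)] graph assms by simp_all

lemma ccomp_args:
  assumes "cd f = X1" "cd g = X1" "dm g = dm f" "d1 \<cdot> f = d0 \<cdot> g"
  shows "cd g = X1" "cd (s0 \<cdot> (d1 \<cdot> f)) = X1" "cd f = X1" "dm (s0 \<cdot> (d1 \<cdot> f)) = dm g" "dm f = dm g"
    "d0 \<cdot> g = d0 \<cdot> (s0 \<cdot> (d1 \<cdot> f))" "d1 \<cdot> (s0 \<cdot> (d1 \<cdot> f)) = d1 \<cdot> f"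
proof -
  have c: "cd (d1 \<cdot> f) = X0" using assms graph by simp
  show "cd g = X1" "cd (s0 \<cdot> (d1 \<cdot> f)) = X1" "cd f = X1" "dm (s0 \<cdot> (d1 \<cdot> f)) = dm g" "dm f = dm g"
    "d0 \<cdot> g = d0 \<cdot> (s0 \<cdot> (d1 \<cdot> f))" "d1 \<cdot> (s0 \<cdot> (d1 \<cdot> f)) = d1 \<cdot> f"
    using s0_comp[OF c] assms graph by simp_all
qed

lemma ccomp:
  assumes "cd f = X1" "cd g = X1" "dm g = dm f" "d1 \<cdot> f = d0 \<cdot> g"
  shows "dm (ccomp f g) = dm f" "cd (ccomp f g) = X1" "d0 \<cdot> ccomp f g = d0 \<cdot> f" "d1 \<cdot> ccomp f g = d1 \<cdot> g"
  unfolding ccomp_def using conn[OF ccomp_args[OF assms]] assms(3) by simp_all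

lemma ccomp_comp:
  assumes "cd f = X1" "cd g = X1" "dm g = dm f" "d1 \<cdot> f = d0 \<cdot> g" "cd h = dm f"
  shows "ccomp f g \<cdot> h = ccomp (f \<cdot> h) (g \<cdot> h)"
proof -
  have "ccomp f g \<cdot> h = conn (g \<cdot> h) ((s0 \<cdot> (d1 \<cdot> f)) \<cdot> h) (f \<cdot> h)"
    unfolding ccomp_def by (rule conn_comp[OF ccomp_args[OF assms(1-4)]]) (use assms(3,5) in simp)
  then show ?thesis unfolding ccomp_def using assms(1,3,5) graph by simp
qed

lemma ccomp_assoc:
  assumes "cd f = X1" "cd g = X1" "cd h = X1" "dm g = dm f" "dm h = dm f"
    "d1 \<cdot> f = d0 \<cdot> g" "d1 \<cdot> g = d0 \<cdot> h"
  shows "ccomp (ccomp f g) h = ccomp f (ccomp g h)"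
proof -
  note fg = ccomp_args[OF assms(1,2,4,6)] and gh = ccomp_args[OF assms(2,3) _ assms(7)]
  have "ccomp (ccomp f g) h = conn h (s0 \<cdot> (d1 \<cdot> g)) (conn g (s0 \<cdot> (d1 \<cdot> f)) f)"
    unfolding ccomp_def[of "ccomp f g" h] ccomp(4)[OF assms(1,2,4,6)] unfolding ccomp_def ..
  also have "\<dots> = conn (conn h (s0 \<cdot> (d1 \<cdot> g)) g) (s0 \<cdot> (d1 \<cdot> f)) f"
    by (rule conn_assoc[OF assms(3) gh(2) assms(2) fg(2) assms(1) gh(4) _ _ _ gh(6,7) fg(6,7)])
      (use assms(4,5) fg(4) in simp_all)
  finally show ?thesis unfolding ccomp_def .
qed

lemma ccomp_unit_left: "ccomp (s0 \<cdot> d0) (idm X1) = idm X1"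
proof -
  have "ccomp (s0 \<cdot> d0) (idm X1) = conn (idm X1) (s0 \<cdot> d0) (s0 \<cdot> d0)"
    unfolding ccomp_def using s0_comp[of d0] graph by simp
  also have "\<dots> = idm X1" by (rule conn_cancel_right) (use s0_comp[of d0] graph in simp_all)
  finally show ?thesis .
qed

lemma ccomp_unit_right: "ccomp (idm X1) (s0 \<cdot> d1) = idm X1"
proof -
  have "ccomp (idm X1) (s0 \<cdot> d1) = conn (s0 \<cdot> d1) (s0 \<cdot> d1) (idm X1)"
    unfolding ccomp_def using graph by simp
  also have "\<dots> = idm X1" by (rule conn_cancel_left) (use s0_comp[of d1] graph in simp_all)
  finally show ?thesis .
qed

lemma cinv: "dm cinv = X1" "cd cinv = X1" "d0 \<cdot> cinv = d1" "d1 \<cdot> cinv = d0"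
  unfolding cinv_def using conn[of "s0 \<cdot> d0" "idm X1" "s0 \<cdot> d1"] s0_comp[of d0] s0_comp[of d1] graph
  by simp_all

lemma ccomp_inv_right: "ccomp (idm X1) cinv = s0 \<cdot> d0"
proof -
  have "ccomp (idm X1) cinv = conn (conn (s0 \<cdot> d0) (idm X1) (s0 \<cdot> d1)) (s0 \<cdot> d1) (idm X1)"
    unfolding ccomp_def cinv_def using graph by simp
  also have "\<dots> = conn (s0 \<cdot> d0) (idm X1) (idm X1)"
    by (rule conn_absorb_left) (use s0_comp[of d0] s0_comp[of d1] graph in simp_all)
  also have "\<dots> = s0 \<cdot> d0" by (rule conn_cancel_right) (use s0_comp[of d0] graph in simp_all)
  finally show ?thesis .
qed

lemma ccomp_inv_left: "ccomp cinv (idm X1) = s0 \<cdot> d1"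
proof -
  have "ccomp cinv (idm X1) = conn (idm X1) (s0 \<cdot> d0) cinv"
    unfolding ccomp_def using cinv(4) by simp
  also have "\<dots> = conn (idm X1) (idm X1) (s0 \<cdot> d1)" unfolding cinv_def
    by (rule conn_absorb_right) (use s0_comp[of d0] s0_comp[of d1] graph in simp_all)
  also have "\<dots> = s0 \<cdot> d1" by (rule conn_cancel_left) (use s0_comp[of d1] graph in simp_all)
  finally show ?thesis .
qed

lemma ccomp_generic_assoc:
  assumes pb: "is_pullback C d1 d0 P \<pi>1 \<pi>2" and pq: "is_pullback C \<pi>2 \<pi>1 Z q1 q2"
  shows "ccomp (ccomp \<pi>1 \<pi>2 \<cdot> q1) (\<pi>2 \<cdot> q2) = ccomp (\<pi>1 \<cdot> q1) (ccomp \<pi>1 \<pi>2 \<cdot> q2)"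
proof -
  have Q: "cd \<pi>1 = X1" "cd \<pi>2 = X1" "dm \<pi>2 = dm \<pi>1" "d1 \<cdot> \<pi>1 = d0 \<cdot> \<pi>2" "dm \<pi>1 = P"
    using pullbackD[OF pb] graph by simp_all
  have q: "dm q1 = Z" "dm q2 = Z" "cd q1 = P" "cd q2 = P" "\<pi>2 \<cdot> q1 = \<pi>1 \<cdot> q2"
    using pullbackD[OF pq] Q by auto
  have fg: "d1 \<cdot> (\<pi>1 \<cdot> q1) = d0 \<cdot> (\<pi>1 \<cdot> q2)"
    using comp_eq_extend[OF Q(4), of q1] q Q graph by simp
  have gh: "d1 \<cdot> (\<pi>1 \<cdot> q2) = d0 \<cdot> (\<pi>2 \<cdot> q2)"
    using comp_eq_extend2[OF Q(4), of q2] q Q graph by simp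
  have "ccomp \<pi>1 \<pi>2 \<cdot> q1 = ccomp (\<pi>1 \<cdot> q1) (\<pi>1 \<cdot> q2)" "ccomp \<pi>1 \<pi>2 \<cdot> q2 = ccomp (\<pi>1 \<cdot> q2) (\<pi>2 \<cdot> q2)"
    using ccomp_comp[OF Q(1-4)] Q(5) q by simp_all
  then show ?thesis using ccomp_assoc[of "\<pi>1 \<cdot> q1" "\<pi>1 \<cdot> q2" "\<pi>2 \<cdot> q2"] fg gh q Q by simp
qed

lemma groupoid: "is_groupoid C X0 X1 d0 d1 s0"
proof -
  obtain P \<pi>1 \<pi>2 where pb: "is_pullback C d1 d0 P \<pi>1 \<pi>2" using pullback_exists[OF fc] graph by metis
  have Q: "cd \<pi>1 = X1" "cd \<pi>2 = X1" "dm \<pi>2 = dm \<pi>1" "d1 \<cdot> \<pi>1 = d0 \<cdot> \<pi>2" "dm \<pi>1 = P"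
    using pullbackD[OF pb] graph by simp_all
  define mu where "mu = ccomp \<pi>1 \<pi>2"
  have MU: "dm mu = P" "cd mu = X1" "d0 \<cdot> mu = d0 \<cdot> \<pi>1" "d1 \<cdot> mu = d1 \<cdot> \<pi>2"
    using ccomp[OF Q(1-4)] Q(5) unfolding mu_def by simp_all
  have mu_comp: "mu \<cdot> e = ccomp (\<pi>1 \<cdot> e) (\<pi>2 \<cdot> e)" if "cd e = P" for e
    unfolding mu_def using ccomp_comp[OF Q(1-4)] Q(5) that by simp
  have hom: "hom C e X P \<longleftrightarrow> dm e = X \<and> cd e = P" for e X unfolding hom_def ..
  show ?thesis unfolding is_groupoid_def
  proof (intro conjI exI allI impI)
    show "refl_graph C X0 X1 d0 d1 s0" "is_pullback C d1 d0 P \<pi>1 \<pi>2" by (fact rg pb)+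
    show "hom C mu P X1" "d0 \<cdot> mu = d0 \<cdot> \<pi>1" "d1 \<cdot> mu = d1 \<cdot> \<pi>2"
      "hom C cinv X1 X1" "d0 \<cdot> cinv = d1" "d1 \<cdot> cinv = d0"
      using MU cinv unfolding hom_def by simp_all
  next
    fix e assume "hom C e X1 P \<and> \<pi>1 \<cdot> e = s0 \<cdot> d0 \<and> \<pi>2 \<cdot> e = idm X1"
    then show "mu \<cdot> e = idm X1" using mu_comp ccomp_unit_left unfolding hom by simp
  next
    fix e assume "hom C e X1 P \<and> \<pi>1 \<cdot> e = idm X1 \<and> \<pi>2 \<cdot> e = s0 \<cdot> d1"
    then show "mu \<cdot> e = idm X1" using mu_comp ccomp_unit_right unfolding hom by simp
  next
    fix e assume "hom C e X1 P \<and> \<pi>1 \<cdot> e = idm X1 \<and> \<pi>2 \<cdot> e = cinv"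
    then show "mu \<cdot> e = s0 \<cdot> d0" using mu_comp ccomp_inv_right unfolding hom by simp
  next
    fix e assume "hom C e X1 P \<and> \<pi>1 \<cdot> e = cinv \<and> \<pi>2 \<cdot> e = idm X1"
    then show "mu \<cdot> e = s0 \<cdot> d1" using mu_comp ccomp_inv_left unfolding hom by simp
  next
    fix Z q1 q2 u v
    assume h: "is_pullback C \<pi>2 \<pi>1 Z q1 q2 \<and>
      hom C u Z P \<and> \<pi>1 \<cdot> u = mu \<cdot> q1 \<and> \<pi>2 \<cdot> u = \<pi>2 \<cdot> q2 \<and>
      hom C v Z P \<and> \<pi>1 \<cdot> v = \<pi>1 \<cdot> q1 \<and> \<pi>2 \<cdot> v = mu \<cdot> q2"
    then have "cd u = P" "cd v = P" unfolding hom by auto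
    then have "mu \<cdot> u = ccomp (mu \<cdot> q1) (\<pi>2 \<cdot> q2)" "mu \<cdot> v = ccomp (\<pi>1 \<cdot> q1) (mu \<cdot> q2)"
      using mu_comp h by simp_all
    then show "mu \<cdot> u = mu \<cdot> v" using ccomp_generic_assoc[OF pb conjunct1[OF h]] unfolding mu_def by simp
  qed
qed


lemma sigma_groupoid: "sigma_groupoid C Sig X0 X1 d0 d1 s0"
proof -
  have "(d0, s0) \<in> Sig"
    by (rule sigma_split_epi_from_kernel[OF fib k kernel_is_sigma_relD(1)[OF ks k]]) (use graph in simp_all)
  then show ?thesis unfolding sigma_groupoid_def using groupoid by blast
qed

end

context cat_context begin

lemma sigma_groupoid_kernel_sigma_commute:
  assumes fc: "finitely_complete C" and fib: "fibrational C Sig"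
    and sg: "sigma_groupoid C Sig X0 X1 d0 d1 s0"
  shows "kernel_is_sigma_rel C Sig d0 \<and> kernels_commute C d0 d1"
proof -
  have sig: "(d0, s0) \<in> Sig" and g: "is_groupoid C X0 X1 d0 d1 s0"
    using sg unfolding sigma_groupoid_def by blast+
  then obtain P \<pi>1 \<pi>2 mu i where "internal_groupoid C X0 X1 d0 d1 s0 P \<pi>1 \<pi>2 mu i"
    using is_category fc unfolding is_groupoid_def internal_groupoid_def internal_groupoid_axioms_def
      cat_context_def by blast
  then interpret G: internal_groupoid C X0 X1 d0 d1 s0 P \<pi>1 \<pi>2 mu i .
  show ?thesis using G.kernel_sigma_rel[OF fib sig] G.kernels_commute by blast
qed

lemma connector_exists:
  assumes fc: "finitely_complete C" and fib: "fibrational C Sig" and mal: "sigma_maltsev C Sig"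
    and rg: "refl_graph C X0 X1 d0 d1 s0" and ks: "kernel_is_sigma_rel C Sig d0"
    and kc: "kernels_commute C d0 d1"
  obtains K k0 k1 \<delta> L l0 l1 \<epsilon> PP pR pS p
  where "connector_context C Sig X0 X1 d0 d1 s0 K k0 k1 \<delta> L l0 l1 \<epsilon> PP pR pS p"
proof -
  have RG: "dm d0 = X1" "cd d0 = X0" "dm d1 = X1" "cd d1 = X0" "dm s0 = X0" "cd s0 = X1"
    using rg unfolding refl_graph_def hom_def by auto
  obtain K k0 k1 \<delta> where k: "kernel_rel C d0 K k0 k1 \<delta>" using kernel_rel_exists[OF fc] by blast
  obtain L l0 l1 \<epsilon> where l: "kernel_rel C d1 L l0 l1 \<epsilon>" using kernel_rel_exists[OF fc] by blast
  note KB = kernel_relD[OF k] and LB = kernel_relD[OF l]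
  obtain PP pR pS where pbP: "is_pullback C k1 l0 PP pR pS" using pullback_exists[OF fc] KB LB RG by metis
  have e1: "l0 \<cdot> (\<epsilon> \<cdot> k1) = k1" using comp_eq_extend[OF LB(9)] KB LB RG by simp
  have e2: "k1 \<cdot> (\<delta> \<cdot> l0) = l0" using comp_eq_extend[OF KB(10)] KB LB RG by simp
  define \<sigma>R where "\<sigma>R = pb_pair C pR pS (idm K) (\<epsilon> \<cdot> k1)"
  define \<sigma>S where "\<sigma>S = pb_pair C pR pS (\<delta> \<cdot> l0) (idm L)"
  have SR: "dm \<sigma>R = K" "cd \<sigma>R = PP" "pR \<cdot> \<sigma>R = idm K" "pS \<cdot> \<sigma>R = \<epsilon> \<cdot> k1"
    using pb_pair[OF pbP, of "idm K" "\<epsilon> \<cdot> k1", folded \<sigma>R_def] e1 KB LB RG by simp_all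
  have SS: "dm \<sigma>S = L" "cd \<sigma>S = PP" "pR \<cdot> \<sigma>S = \<delta> \<cdot> l0" "pS \<cdot> \<sigma>S = idm L"
    using pb_pair[OF pbP, of "\<delta> \<cdot> l0" "idm L", folded \<sigma>S_def] e2 KB LB RG by simp_all
  have "commutator_zero C (dm d0) K k0 k1 \<delta> L l0 l1 \<epsilon>"
    using kc k l unfolding kernels_commute_def by blast
  then have "\<exists>p. hom C p PP (dm d0) \<and> p \<cdot> \<sigma>R = k0 \<and> p \<cdot> \<sigma>S = l1"
    using pbP SR SS KB LB unfolding commutator_zero_def hom_def by blast
  then obtain p where p: "dm p = PP" "cd p = X1" "p \<cdot> \<sigma>R = k0" "p \<cdot> \<sigma>S = l1"
    using RG unfolding hom_def by blast
  have "connector_context C Sig X0 X1 d0 d1 s0 K k0 k1 \<delta> L l0 l1 \<epsilon> PP pR pS p"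
    by unfold_locales (use is_category fc fib mal rg k l ks pbP p[unfolded \<sigma>R_def \<sigma>S_def] in auto)
  then show ?thesis by (rule that)
qed

lemma kernel_sigma_commute_sigma_groupoid:
  assumes "finitely_complete C" "fibrational C Sig" "sigma_maltsev C Sig" "refl_graph C X0 X1 d0 d1 s0"
    "kernel_is_sigma_rel C Sig d0" "kernels_commute C d0 d1"
  shows "sigma_groupoid C Sig X0 X1 d0 d1 s0"
proof -
  obtain K k0 k1 \<delta> L l0 l1 \<epsilon> PP pR pS p
    where "connector_context C Sig X0 X1 d0 d1 s0 K k0 k1 \<delta> L l0 l1 \<epsilon> PP pR pS p"
    by (rule connector_exists[OF assms])
  then interpret connector_context C Sig X0 X1 d0 d1 s0 K k0 k1 \<delta> L l0 l1 \<epsilon> PP pR pS p .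
  show ?thesis by (rule sigma_groupoid)
qed

end

theorem proposition3p11:
  fixes C :: "('o, 'm) cat" and Sig :: "('m \<times> 'm) set"
  assumes "category C" and "finitely_complete C" and "fibrational C Sig"
    and "sigma_maltsev C Sig"
  shows "(\<forall>X0 X1 d0 d1 s0. refl_graph C X0 X1 d0 d1 s0 \<longrightarrow>
            (sigma_groupoid C Sig X0 X1 d0 d1 s0 \<longleftrightarrow>
             kernel_is_sigma_rel C Sig d0 \<and> kernels_commute C d0 d1)) \<and>
         (\<forall>X S d0 d1 s0. refl_rel C X S d0 d1 s0 \<longrightarrow>
            (sigma_equiv_rel C Sig X S d0 d1 s0 \<longleftrightarrow> kernel_is_sigma_rel C Sig d0))"
proof -
  interpret cat_context C by unfold_locales (rule assms(1))
  show ?thesis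
    using sigma_groupoid_kernel_sigma_commute[OF assms(2,3)]
      kernel_sigma_commute_sigma_groupoid[OF assms(2,3,4)]
      sigma_equiv_rel_kernel_sigma[OF assms(2,3)]
      kernel_sigma_rel_sigma_equiv_rel[OF assms(2,3,4)] by blast
qed

end
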